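(* Let $\rho\in(0,\frac\pi2)$, $k>0$, $\eta>0$. For all $\delta_\omega\in\mathbb R^N$ and all $\tilde\theta,\tilde\theta^*\in\mathbb S(\rho)$, setting $\delta_\theta:=\tilde\theta-\tilde\theta^*$, the function $$V:=\tfrac12\delta_\omega^TM\delta_\omega+k\big(U(\tilde\theta)-U(\tilde\theta^* )-\nabla U(\tilde\theta^* )^T(\tilde\theta-\tilde\theta^* )\big)+\eta\big(\nabla U(\tilde\theta)-\nabla U(\tilde\theta^* )\big)^TY^TM^{1/2}\delta_\omega$$ satisfies $$V\le\tfrac34\delta_\omega^TM\delta_\omega+\big(\tfrac12k\lambda_N+\eta^2\lambda_N^2\big)|\delta_\theta|^2,$$ $$V\ge\tfrac14\delta_\omega^TM\delta_\omega+\big(\tfrac12k\lambda_2\sin(\rho)-\eta^2\lambda_N^2\big)|\delta_\theta|^2,$$ where $\lambda_2$ and $\lambda_N$ are the second-smallest and largest eigenvalues of $M^{-1}L_B$.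
   Context: Let $(\mathcal N,\mathcal E)$ be a connected undirected graph, $\mathcal N=\{1,\dots,N\}$, $E=|\mathcal E|$, with edge weights $B^0_{ij}>0$. Fix an edge orientation, let $A\in\mathbb R^{N\times E}$ be the node-edge incidence matrix, $\Gamma=\mathrm{diag}(B^0_{ij},\{i,j\}\in\mathcal E)$ and $L_B=A\Gamma A^T$. Let $M=\mathrm{diag}(M_1,\dots,M_N)$ with $M_i>0$ and $Y\in\mathbb R^{N\times(N-1)}$ a matrix whose columns form an orthonormal basis of the null space of $\mathbb 1_N^TM^{1/2}$. Define $U(\tilde\theta):=-\mathbb 1_E^T\Gamma\cos(A^TM^{-1/2}Y\tilde\theta)$ for $\tilde\theta\in\mathbb R^{N-1}$ (cosine elementwise), with gradient $\nabla U(\tilde\theta)=Y^TM^{-1/2}A\Gamma\sin(A^TM^{-1/2}Y\tilde\theta)$. For $\rho\in(0,\frac\pi2)$, $\mathbb S(\rho):=\{\tilde\theta:\max_l|(A^TM^{-1/2}Y\tilde\theta)_l|<\frac\pi2-\rho\}$. $|\cdot|$ is the Euclidean norm. *)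

theory Defs
  imports "Jordan_Normal_Form.Char_Poly" "HOL-Computational_Algebra.Polynomial"
begin

text \<open>Graph on nodes 0..N-1; oriented edges given by the list es (edge l goes from
 fst (es!l) to snd (es!l)); edge weights w l (the B^0_{ij}); node inertias m i (the M_i).\<close>

definition adjacent :: "(nat \<times> nat) list \<Rightarrow> nat \<Rightarrow> nat \<Rightarrow> bool" where
  "adjacent es i j \<longleftrightarrow> (i, j) \<in> set es \<or> (j, i) \<in> set es"

definition graph_ok :: "nat \<Rightarrow> (nat \<times> nat) list \<Rightarrow> bool" where
  "graph_ok N es \<longleftrightarrow>
     (\<forall>l < length es. fst (es!l) < N \<and> snd (es!l) < N \<and> fst (es!l) \<noteq> snd (es!l)) \<and>
     (\<forall>l < length es. \<forall>l' < length es. l \<noteq> l' \<longrightarrow>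
        {fst (es!l), snd (es!l)} \<noteq> {fst (es!l'), snd (es!l')})"

definition connected_graph :: "nat \<Rightarrow> (nat \<times> nat) list \<Rightarrow> bool" where
  "connected_graph N es \<longleftrightarrow> (\<forall>i < N. \<forall>j < N. (adjacent es)\<^sup>*\<^sup>* i j)"

definition inc_mat :: "nat \<Rightarrow> (nat \<times> nat) list \<Rightarrow> real mat" where
  "inc_mat N es = mat N (length es)
     (\<lambda>(i, l). if i = fst (es!l) then 1 else if i = snd (es!l) then -1 else 0)"

definition diag_of :: "nat \<Rightarrow> (nat \<Rightarrow> real) \<Rightarrow> real mat" where
  "diag_of n d = mat n n (\<lambda>(i, j). if i = j then d i else 0)"

definition Gam :: "(nat \<times> nat) list \<Rightarrow> (nat \<Rightarrow> real) \<Rightarrow> real mat" where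
  "Gam es w = diag_of (length es) w"

definition LB :: "nat \<Rightarrow> (nat \<times> nat) list \<Rightarrow> (nat \<Rightarrow> real) \<Rightarrow> real mat" where
  "LB N es w = inc_mat N es * Gam es w * transpose_mat (inc_mat N es)"

definition Mmat :: "nat \<Rightarrow> (nat \<Rightarrow> real) \<Rightarrow> real mat" where
  "Mmat N m = diag_of N m"

definition Msqrt :: "nat \<Rightarrow> (nat \<Rightarrow> real) \<Rightarrow> real mat" where
  "Msqrt N m = diag_of N (\<lambda>i. sqrt (m i))"

definition Minvsqrt :: "nat \<Rightarrow> (nat \<Rightarrow> real) \<Rightarrow> real mat" where
  "Minvsqrt N m = diag_of N (\<lambda>i. 1 / sqrt (m i))"

definition Minv :: "nat \<Rightarrow> (nat \<Rightarrow> real) \<Rightarrow> real mat" where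
  "Minv N m = diag_of N (\<lambda>i. 1 / m i)"

definition edge_angles :: "nat \<Rightarrow> (nat \<times> nat) list \<Rightarrow> (nat \<Rightarrow> real) \<Rightarrow> real mat \<Rightarrow> real vec \<Rightarrow> real vec" where
  "edge_angles N es m Y th = transpose_mat (inc_mat N es) * Minvsqrt N m * Y *\<^sub>v th"

definition Upot :: "nat \<Rightarrow> (nat \<times> nat) list \<Rightarrow> (nat \<Rightarrow> real) \<Rightarrow> (nat \<Rightarrow> real) \<Rightarrow> real mat \<Rightarrow> real vec \<Rightarrow> real" where
  "Upot N es w m Y th =
     - (vec (length es) (\<lambda>_. 1) \<bullet> (Gam es w *\<^sub>v map_vec cos (edge_angles N es m Y th)))"

definition gradU :: "nat \<Rightarrow> (nat \<times> nat) list \<Rightarrow> (nat \<Rightarrow> real) \<Rightarrow> (nat \<Rightarrow> real) \<Rightarrow> real mat \<Rightarrow> real vec \<Rightarrow> real vec" where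
  "gradU N es w m Y th =
     transpose_mat Y * Minvsqrt N m * inc_mat N es * Gam es w *\<^sub>v map_vec sin (edge_angles N es m Y th)"

definition Sset :: "nat \<Rightarrow> (nat \<times> nat) list \<Rightarrow> (nat \<Rightarrow> real) \<Rightarrow> real mat \<Rightarrow> real \<Rightarrow> real vec set" where
  "Sset N es m Y \<rho> = {th \<in> carrier_vec (N - 1).
      \<forall>l < length es. \<bar>edge_angles N es m Y th $ l\<bar> < pi / 2 - \<rho>}"

text \<open>Eigenvalues of M^{-1} L_B counted with multiplicity (roots of the characteristic
 polynomial), in increasing order; index 0 is the smallest, index N-1 the largest.\<close>
definition eigs :: "nat \<Rightarrow> (nat \<times> nat) list \<Rightarrow> (nat \<Rightarrow> real) \<Rightarrow> (nat \<Rightarrow> real) \<Rightarrow> real list" where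
  "eigs N es w m = sorted_list_of_multiset (proots (char_poly (Minv N m * LB N es w)))"

definition lambda2 :: "nat \<Rightarrow> (nat \<times> nat) list \<Rightarrow> (nat \<Rightarrow> real) \<Rightarrow> (nat \<Rightarrow> real) \<Rightarrow> real" where
  "lambda2 N es w m = eigs N es w m ! 1"

definition lambdaN :: "nat \<Rightarrow> (nat \<times> nat) list \<Rightarrow> (nat \<Rightarrow> real) \<Rightarrow> (nat \<Rightarrow> real) \<Rightarrow> real" where
  "lambdaN N es w m = eigs N es w m ! (N - 1)"

end

theory Submission
  imports Defs
begin

text \<open>Write \<open>V = W/2 + k B + \<eta> X\<close> with \<open>W = \<delta>\<^sub>\<omega>\<^sup>T M \<delta>\<^sub>\<omega>\<close>, B the Bregman divergence of U
  between \<open>\<theta>\<close> and \<open>\<theta>\<^sup>*\<close>, and X the cross term. U is a weighted sum of \<open>-cos\<close> of the edge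
  angles, so B is the weighted sum of the scalar Bregman divergences of \<open>-cos\<close>; by Taylor's
  theorem each lies between \<open>sin \<rho> d\<^sup>2/2\<close> and \<open>d\<^sup>2/2\<close> on \<open>S(\<rho>)\<close>, d the difference of the
  edge angles. The weighted sum of the \<open>d\<^sup>2\<close> is the quadratic form of the symmetric matrix
  \<open>M\<^sup>-\<^sup>1\<^sup>/\<^sup>2 L\<^sub>B M\<^sup>-\<^sup>1\<^sup>/\<^sup>2\<close> (similar to \<open>M\<^sup>-\<^sup>1 L\<^sub>B\<close>) at \<open>Y \<delta>\<^sub>\<theta>\<close>, a vector orthogonal to its kernel
  vector \<open>M\<^sup>1\<^sup>/\<^sup>2 \<one>\<close>, so by the Rayleigh quotient characterisation of eigenvalues it lies
  between \<open>\<lambda>\<^sub>2 |\<delta>\<^sub>\<theta>|\<^sup>2\<close> and \<open>\<lambda>\<^sub>N |\<delta>\<^sub>\<theta>|\<^sup>2\<close>. Cauchy--Schwarz and \<open>|sin a - sin b| \<le> |a - b|\<close>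
  bound the gradient difference by \<open>\<lambda>\<^sub>N |\<delta>\<^sub>\<theta>|\<close>, and Young's inequality splits the cross term
  into \<open>\<eta>\<^sup>2 \<lambda>\<^sub>N\<^sup>2 |\<delta>\<^sub>\<theta>|\<^sup>2\<close> and \<open>W/4\<close>.\<close>

section \<open>Rayleigh quotients of real symmetric matrices\<close>

lemma quadratic_nonneg_imp_discriminant_le:
  fixes a b c :: real
  assumes c: "0 \<le> c" and nonneg: "\<And>t. 0 \<le> a + 2 * b * t + c * t\<^sup>2"
  shows "b\<^sup>2 \<le> a * c"
proof (cases "c = 0")
  case True
  have "b = 0"
  proof (rule ccontr)
    assume "b \<noteq> 0"
    then have "a + 2 * b * (- (a + 1) / (2 * b)) + c * (- (a + 1) / (2 * b))\<^sup>2 = -1"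
      using True by (simp add: field_simps)
    with nonneg show False by (metis neg_0_le_iff_le not_one_le_zero)
  qed
  with True show ?thesis by simp
next
  case False
  with c have "0 < c" by simp
  have "a + 2 * b * (- b / c) + c * (- b / c)\<^sup>2 = a - b\<^sup>2 / c"
    using \<open>0 < c\<close> by (simp add: field_simps power2_eq_square)
  with nonneg[of "- b / c"] have "b\<^sup>2 / c \<le> a" by simp
  with \<open>0 < c\<close> show ?thesis by (simp add: pos_divide_le_eq)
qed

lemma weighted_Cauchy_Schwarz:
  fixes w f g :: "'a \<Rightarrow> real"
  assumes "\<And>i. i \<in> A \<Longrightarrow> 0 \<le> w i"
  shows "(\<Sum>i\<in>A. w i * f i * g i)\<^sup>2 \<le> (\<Sum>i\<in>A. w i * (f i)\<^sup>2) * (\<Sum>i\<in>A. w i * (g i)\<^sup>2)"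
proof (rule quadratic_nonneg_imp_discriminant_le)
  show "0 \<le> (\<Sum>i\<in>A. w i * (g i)\<^sup>2)" using assms by (simp add: sum_nonneg)
  fix t :: real
  have "(\<Sum>i\<in>A. w i * (f i)\<^sup>2) + 2 * (\<Sum>i\<in>A. w i * f i * g i) * t + (\<Sum>i\<in>A. w i * (g i)\<^sup>2) * t\<^sup>2
      = (\<Sum>i\<in>A. w i * (f i + t * g i)\<^sup>2)"
    by (simp add: sum.distrib sum_distrib_left sum_distrib_right power2_eq_square algebra_simps)
  also have "0 \<le> \<dots>" using assms by (simp add: sum_nonneg)
  finally show "0 \<le> (\<Sum>i\<in>A. w i * (f i)\<^sup>2) + 2 * (\<Sum>i\<in>A. w i * f i * g i) * t
      + (\<Sum>i\<in>A. w i * (g i)\<^sup>2) * t\<^sup>2" .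
qed

lemma square_le_mult_imp_le:
  fixes a b :: real
  assumes "0 \<le> b" and "a\<^sup>2 \<le> b * a"
  shows "a \<le> b"
  using assms by (smt (verit) mult_le_cancel_right power2_eq_square zero_le_power2)

lemma scalar_prod_self_nonneg: "0 \<le> (x :: real vec) \<bullet> x"
  using conjugate_square_ge_0_vec[of x] by simp

lemma scalar_prod_self_pos:
  "(x :: real vec) \<in> carrier_vec n \<Longrightarrow> x \<noteq> 0\<^sub>v n \<Longrightarrow> 0 < x \<bullet> x"
  using conjugate_square_greater_0_vec[of x n] by simp

lemma scalar_prod_Cauchy_Schwarz:
  fixes x y :: "real vec"
  assumes "x \<in> carrier_vec n" and "y \<in> carrier_vec n"
  shows "(x \<bullet> y)\<^sup>2 \<le> (x \<bullet> x) * (y \<bullet> y)"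
  using weighted_Cauchy_Schwarz[of "{0..<n}" "\<lambda>_. 1" "\<lambda>i. x $ i" "\<lambda>i. y $ i"] assms
  by (simp add: scalar_prod_def power2_eq_square)

lemma abs_scalar_prod_le_half_sum:
  fixes x y :: "real vec"
  assumes "x \<in> carrier_vec n" and "y \<in> carrier_vec n"
  shows "2 * \<bar>x \<bullet> y\<bar> \<le> x \<bullet> x + y \<bullet> y"
proof (rule power2_le_imp_le)
  have "(2 * \<bar>x \<bullet> y\<bar>)\<^sup>2 \<le> 4 * ((x \<bullet> x) * (y \<bullet> y))"
    using scalar_prod_Cauchy_Schwarz[OF assms] by (simp add: power_mult_distrib)
  also have "\<dots> \<le> (x \<bullet> x + y \<bullet> y)\<^sup>2"
    using zero_le_power2[of "x \<bullet> x - y \<bullet> y"] by (simp add: power2_eq_square algebra_simps)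
  finally show "(2 * \<bar>x \<bullet> y\<bar>)\<^sup>2 \<le> (x \<bullet> x + y \<bullet> y)\<^sup>2" .
  show "0 \<le> x \<bullet> x + y \<bullet> y" using scalar_prod_self_nonneg[of x] scalar_prod_self_nonneg[of y] by simp
qed

lemma mult_mat_vec_carrier_iff [simp]: "A *\<^sub>v v \<in> carrier_vec n \<longleftrightarrow> dim_row A = n"
  unfolding carrier_vec_def by simp

lemma mult_mat_vec_zero [simp]: "dim_col A = k \<Longrightarrow> A *\<^sub>v 0\<^sub>v k = 0\<^sub>v (dim_row A)"
  by (intro eq_vecI) auto

lemma mult_mat_vec_sq_bound:
  fixes R :: "real mat"
  assumes R: "R \<in> carrier_mat n k"
  obtains C where "0 < C" and "\<And>x. x \<in> carrier_vec k \<Longrightarrow> (R *\<^sub>v x) \<bullet> (R *\<^sub>v x) \<le> C * (x \<bullet> x)"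
proof
  define S where "S = (\<Sum>i<n. row R i \<bullet> row R i)"
  have "0 \<le> S" unfolding S_def by (simp add: sum_nonneg scalar_prod_self_nonneg)
  then show "0 < 1 + S" by simp
  fix x :: "real vec" assume x: "x \<in> carrier_vec k"
  have "(R *\<^sub>v x) \<bullet> (R *\<^sub>v x) = (\<Sum>i<n. (row R i \<bullet> x)\<^sup>2)"
    using R by (simp add: scalar_prod_def[of "R *\<^sub>v x"] power2_eq_square lessThan_atLeast0)
  also have "\<dots> \<le> (\<Sum>i<n. (row R i \<bullet> row R i) * (x \<bullet> x))"
    using R x by (intro sum_mono scalar_prod_Cauchy_Schwarz[of _ k]) auto
  also have "\<dots> = S * (x \<bullet> x)" by (simp add: S_def sum_distrib_right)
  also have "\<dots> \<le> (1 + S) * (x \<bullet> x)" using scalar_prod_self_nonneg[of x] by (simp add: distrib_right)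
  finally show "(R *\<^sub>v x) \<bullet> (R *\<^sub>v x) \<le> (1 + S) * (x \<bullet> x)" .
qed

lemma quadratic_form_bound:
  fixes K :: "real mat"
  assumes K: "K \<in> carrier_mat n n"
  obtains B where "0 < B" and "\<And>x. x \<in> carrier_vec n \<Longrightarrow> \<bar>x \<bullet> (K *\<^sub>v x)\<bar> \<le> B * (x \<bullet> x)"
proof -
  obtain C where C: "0 < C" "\<And>x. x \<in> carrier_vec n \<Longrightarrow> (K *\<^sub>v x) \<bullet> (K *\<^sub>v x) \<le> C * (x \<bullet> x)"
    using mult_mat_vec_sq_bound[OF K] by blast
  have "\<bar>x \<bullet> (K *\<^sub>v x)\<bar> \<le> (1 + C) / 2 * (x \<bullet> x)" if x: "x \<in> carrier_vec n" for x
    using abs_scalar_prod_le_half_sum[OF x, of "K *\<^sub>v x"] C(2)[OF x] K x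
    by (simp add: algebra_simps)
  with C(1) show thesis by (intro that[of "(1 + C) / 2"]) auto
qed

lemma symmetric_mat_scalar_prod:
  fixes K :: "'a :: comm_semiring_0 mat"
  assumes K: "K \<in> carrier_mat n n" and sym: "transpose_mat K = K"
    and x: "x \<in> carrier_vec n" and y: "y \<in> carrier_vec n"
  shows "x \<bullet> (K *\<^sub>v y) = y \<bullet> (K *\<^sub>v x)"
  using transpose_vec_mult_scalar[OF K y x] comm_scalar_prod[of "K *\<^sub>v x" n y] K x y
  by (simp add: sym)

lemma transpose_congruence_symmetric:
  fixes A B :: "'a :: comm_semiring_0 mat"
  assumes A: "A \<in> carrier_mat n k" and B: "B \<in> carrier_mat k k" and sym: "transpose_mat B = B"
  shows "transpose_mat (A * B * transpose_mat A) = A * B * transpose_mat A"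
proof -
  have AB: "A * B \<in> carrier_mat n k" using A B by simp
  have "transpose_mat (A * B * transpose_mat A) = transpose_mat (transpose_mat A) * transpose_mat (A * B)"
    by (rule transpose_mult[OF AB]) (use A in simp)
  also have "\<dots> = A * (transpose_mat B * transpose_mat A)" using transpose_mult[OF A B] by simp
  also have "\<dots> = A * B * transpose_mat A" using A B by (simp add: sym assoc_mult_mat[of A n k B k _ n])
  finally show ?thesis .
qed

lemma psd_form_Cauchy_Schwarz:
  fixes R :: "real mat"
  assumes R: "R \<in> carrier_mat n n" and sym: "transpose_mat R = R"
    and psd: "\<And>u. u \<in> carrier_vec n \<Longrightarrow> 0 \<le> u \<bullet> (R *\<^sub>v u)"
    and x: "x \<in> carrier_vec n" and y: "y \<in> carrier_vec n"
  shows "(y \<bullet> (R *\<^sub>v x))\<^sup>2 \<le> (x \<bullet> (R *\<^sub>v x)) * (y \<bullet> (R *\<^sub>v y))"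
proof (rule quadratic_nonneg_imp_discriminant_le)
  show "0 \<le> y \<bullet> (R *\<^sub>v y)" by (rule psd[OF y])
  fix t :: real
  have ty: "t \<cdot>\<^sub>v y \<in> carrier_vec n" using y by simp
  have Rx: "R *\<^sub>v x \<in> carrier_vec n" and Ry: "R *\<^sub>v y \<in> carrier_vec n" using R x y by auto
  have "R *\<^sub>v (x + t \<cdot>\<^sub>v y) = R *\<^sub>v x + t \<cdot>\<^sub>v (R *\<^sub>v y)"
    by (simp add: mult_add_distrib_mat_vec[OF R x ty] mult_mat_vec[OF R y])
  then have "(x + t \<cdot>\<^sub>v y) \<bullet> (R *\<^sub>v (x + t \<cdot>\<^sub>v y))
      = x \<bullet> (R *\<^sub>v x) + t * (x \<bullet> (R *\<^sub>v y)) + t * (y \<bullet> (R *\<^sub>v x)) + t * t * (y \<bullet> (R *\<^sub>v y))"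
    using x y ty Rx Ry
    by (simp add: add_scalar_prod_distrib[of _ n] scalar_prod_add_distrib[of _ n] distrib_left)
  also have "\<dots> = x \<bullet> (R *\<^sub>v x) + 2 * (y \<bullet> (R *\<^sub>v x)) * t + (y \<bullet> (R *\<^sub>v y)) * t\<^sup>2"
    using symmetric_mat_scalar_prod[OF R sym x y] by (simp add: power2_eq_square)
  finally show "0 \<le> x \<bullet> (R *\<^sub>v x) + 2 * (y \<bullet> (R *\<^sub>v x)) * t + (y \<bullet> (R *\<^sub>v y)) * t\<^sup>2"
    using psd[of "x + t \<cdot>\<^sub>v y"] x ty by simp
qed

lemma left_inverse_of_trivial_kernel:
  fixes R :: "'a :: field mat"
  assumes R: "R \<in> carrier_mat n n" and inj: "\<And>x. x \<in> carrier_vec n \<Longrightarrow> R *\<^sub>v x = 0\<^sub>v n \<Longrightarrow> x = 0\<^sub>v n"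
  obtains Q where "Q \<in> carrier_mat n n" and "Q * R = 1\<^sub>m n"
proof -
  have "det R \<noteq> 0" using det_0_iff_vec_prod_zero_field[OF R] inj by auto
  then have "R \<in> Units (ring_mat TYPE('a) n ())" by (rule det_non_zero_imp_unit[OF R])
  with that show thesis unfolding Units_def ring_mat_def by auto
qed

text \<open>A left inverse Q of R gives \<open>|x|\<^sup>2 \<le> C |R x|\<^sup>2\<close>, and Cauchy--Schwarz for the
  form of R gives \<open>|R x|\<^sup>2 \<le> D x\<^sup>T R x\<close>.\<close>

lemma psd_trivial_kernel_coercive:
  fixes R :: "real mat"
  assumes R: "R \<in> carrier_mat n n" and sym: "transpose_mat R = R"
    and psd: "\<And>u. u \<in> carrier_vec n \<Longrightarrow> 0 \<le> u \<bullet> (R *\<^sub>v u)"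
    and inj: "\<And>x. x \<in> carrier_vec n \<Longrightarrow> R *\<^sub>v x = 0\<^sub>v n \<Longrightarrow> x = 0\<^sub>v n"
  obtains C where "0 < C" and "\<And>x. x \<in> carrier_vec n \<Longrightarrow> x \<bullet> x \<le> C * (x \<bullet> (R *\<^sub>v x))"
proof -
  obtain Q where Q: "Q \<in> carrier_mat n n" "Q * R = 1\<^sub>m n"
    using left_inverse_of_trivial_kernel[OF R inj] by blast
  obtain C where C: "0 < C" "\<And>z. z \<in> carrier_vec n \<Longrightarrow> (Q *\<^sub>v z) \<bullet> (Q *\<^sub>v z) \<le> C * (z \<bullet> z)"
    using mult_mat_vec_sq_bound[OF Q(1)] by blast
  obtain D where D: "0 < D" "\<And>z. z \<in> carrier_vec n \<Longrightarrow> \<bar>z \<bullet> (R *\<^sub>v z)\<bar> \<le> D * (z \<bullet> z)"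
    using quadratic_form_bound[OF R] by blast
  have "x \<bullet> x \<le> C * D * (x \<bullet> (R *\<^sub>v x))" if x: "x \<in> carrier_vec n" for x
  proof -
    define z where "z = R *\<^sub>v x"
    have z: "z \<in> carrier_vec n" unfolding z_def using R x by simp
    have "Q *\<^sub>v z = (Q * R) *\<^sub>v x" unfolding z_def using Q(1) R x by simp
    then have "x = Q *\<^sub>v z" using Q(2) x by simp
    then have "x \<bullet> x \<le> C * (z \<bullet> z)" using C(2)[OF z] by simp
    moreover have "z \<bullet> z \<le> D * (x \<bullet> (R *\<^sub>v x))"
    proof (rule square_le_mult_imp_le)
      have "(z \<bullet> z)\<^sup>2 \<le> (x \<bullet> (R *\<^sub>v x)) * (z \<bullet> (R *\<^sub>v z))"
        using psd_form_Cauchy_Schwarz[OF R sym psd x z] unfolding z_def .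
      also have "\<dots> \<le> (x \<bullet> (R *\<^sub>v x)) * (D * (z \<bullet> z))"
        using D(2)[OF z] psd[OF x] by (intro mult_left_mono) auto
      finally show "(z \<bullet> z)\<^sup>2 \<le> D * (x \<bullet> (R *\<^sub>v x)) * (z \<bullet> z)"
        by (simp only: mult.assoc mult.left_commute)
      show "0 \<le> D * (x \<bullet> (R *\<^sub>v x))" using D(1) psd[OF x] by simp
    qed
    ultimately show ?thesis
      using C(1) by (simp add: mult.assoc order_trans[OF _ mult_left_mono])
  qed
  with C(1) D(1) show thesis by (intro that[of "C * D"]) auto
qed

lemma psd_kernel_nontrivial:
  fixes R :: "real mat"
  assumes R: "R \<in> carrier_mat n n" and sym: "transpose_mat R = R"
    and psd: "\<And>u. u \<in> carrier_vec n \<Longrightarrow> 0 \<le> u \<bullet> (R *\<^sub>v u)"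
    and near: "\<And>e. 0 < e \<Longrightarrow> \<exists>x\<in>carrier_vec n. x \<noteq> 0\<^sub>v n \<and> x \<bullet> (R *\<^sub>v x) < e * (x \<bullet> x)"
  obtains x where "x \<in> carrier_vec n" and "x \<noteq> 0\<^sub>v n" and "R *\<^sub>v x = 0\<^sub>v n"
proof (rule ccontr)
  assume "\<not> thesis"
  with that have "\<And>x. x \<in> carrier_vec n \<Longrightarrow> R *\<^sub>v x = 0\<^sub>v n \<Longrightarrow> x = 0\<^sub>v n" by blast
  then obtain C where C: "0 < C" "\<And>x. x \<in> carrier_vec n \<Longrightarrow> x \<bullet> x \<le> C * (x \<bullet> (R *\<^sub>v x))"
    using psd_trivial_kernel_coercive[OF R sym psd] by blast
  obtain x where x: "x \<in> carrier_vec n" "x \<noteq> 0\<^sub>v n" "x \<bullet> (R *\<^sub>v x) < 1 / (2 * C) * (x \<bullet> x)"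
    using near[of "1 / (2 * C)"] C(1) by auto
  have "x \<bullet> x \<le> C * (x \<bullet> (R *\<^sub>v x))" by (rule C(2)[OF x(1)])
  also have "\<dots> < C * (1 / (2 * C) * (x \<bullet> x))"
    using x(3) C(1) by (intro mult_strict_left_mono) auto
  also have "\<dots> = (x \<bullet> x) / 2" using C(1) by simp
  finally show False using scalar_prod_self_pos[OF x(1,2)] by simp
qed

lemma shifted_mat_mult_vec:
  fixes K :: "real mat"
  assumes "K \<in> carrier_mat n n" and "x \<in> carrier_vec n"
  shows "(K - c \<cdot>\<^sub>m 1\<^sub>m n) *\<^sub>v x = K *\<^sub>v x - c \<cdot>\<^sub>v x"
proof -
  have "(c \<cdot>\<^sub>m 1\<^sub>m n) *\<^sub>v x = c \<cdot>\<^sub>v x" using assms(2) by (intro eq_vecI) (simp_all add: row_smult)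
  then show ?thesis using assms by (simp add: minus_mult_distrib_mat_vec[of K n n])
qed

lemma rayleigh_infimum:
  fixes K :: "real mat"
  assumes K: "K \<in> carrier_mat n n" and n: "0 < n"
  obtains \<mu> where "\<And>y. y \<in> carrier_vec n \<Longrightarrow> \<mu> * (y \<bullet> y) \<le> y \<bullet> (K *\<^sub>v y)"
    and "\<And>e. 0 < e \<Longrightarrow> \<exists>x\<in>carrier_vec n. x \<noteq> 0\<^sub>v n \<and> x \<bullet> (K *\<^sub>v x) < (\<mu> + e) * (x \<bullet> x)"
proof -
  define S where "S = {x \<bullet> (K *\<^sub>v x) / (x \<bullet> x) | x. x \<in> carrier_vec n \<and> x \<noteq> 0\<^sub>v n}"
  obtain B where B: "\<And>x. x \<in> carrier_vec n \<Longrightarrow> \<bar>x \<bullet> (K *\<^sub>v x)\<bar> \<le> B * (x \<bullet> x)"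
    using quadratic_form_bound[OF K] by blast
  have "(unit_vec n 0 :: real vec) $ 0 = 1" using n by simp
  then have "unit_vec n 0 \<noteq> (0\<^sub>v n :: real vec)" using n by auto
  then have ne: "S \<noteq> {}" unfolding S_def by (blast intro: unit_vec_carrier)
  have bdd: "bdd_below S" unfolding bdd_below_def
  proof (intro exI ballI)
    fix s assume "s \<in> S"
    then obtain x where x: "x \<in> carrier_vec n" "x \<noteq> 0\<^sub>v n" and s: "s = x \<bullet> (K *\<^sub>v x) / (x \<bullet> x)"
      unfolding S_def by blast
    show "- B \<le> s" using B[OF x(1)] scalar_prod_self_pos[OF x] by (simp add: s pos_le_divide_eq abs_le_iff)
  qed
  show thesis
  proof (rule that[of "Inf S"])
    fix y :: "real vec" assume y: "y \<in> carrier_vec n"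
    show "Inf S * (y \<bullet> y) \<le> y \<bullet> (K *\<^sub>v y)"
    proof (cases "y = 0\<^sub>v n")
      case False
      then have "y \<bullet> (K *\<^sub>v y) / (y \<bullet> y) \<in> S" unfolding S_def using y by blast
      then have "Inf S \<le> y \<bullet> (K *\<^sub>v y) / (y \<bullet> y)" using bdd by (rule cInf_lower)
      then show ?thesis using scalar_prod_self_pos[OF y False] by (simp add: pos_le_divide_eq)
    qed (use K in simp)
  next
    fix e :: real assume "0 < e"
    then have "Inf S < Inf S + e" by simp
    then obtain s where "s \<in> S" "s < Inf S + e" using cInf_less_iff[OF ne bdd] by blast
    then obtain x where x: "x \<in> carrier_vec n" "x \<noteq> 0\<^sub>v n" and "x \<bullet> (K *\<^sub>v x) / (x \<bullet> x) < Inf S + e"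
      unfolding S_def by blast
    then have "x \<bullet> (K *\<^sub>v x) < (Inf S + e) * (x \<bullet> x)"
      using scalar_prod_self_pos[OF x] by (simp add: pos_divide_less_eq)
    with x show "\<exists>x\<in>carrier_vec n. x \<noteq> 0\<^sub>v n \<and> x \<bullet> (K *\<^sub>v x) < (Inf S + e) * (x \<bullet> x)" by blast
  qed
qed

lemma symmetric_min_rayleigh_eigenvector:
  fixes K :: "real mat"
  assumes K: "K \<in> carrier_mat n n" and sym: "transpose_mat K = K" and n: "0 < n"
  obtains \<mu> x where "x \<in> carrier_vec n" and "x \<noteq> 0\<^sub>v n" and "K *\<^sub>v x = \<mu> \<cdot>\<^sub>v x"
    and "\<And>y. y \<in> carrier_vec n \<Longrightarrow> \<mu> * (y \<bullet> y) \<le> y \<bullet> (K *\<^sub>v y)"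
proof -
  obtain \<mu> where low: "\<And>y. y \<in> carrier_vec n \<Longrightarrow> \<mu> * (y \<bullet> y) \<le> y \<bullet> (K *\<^sub>v y)"
    and near: "\<And>e. 0 < e \<Longrightarrow> \<exists>x\<in>carrier_vec n. x \<noteq> 0\<^sub>v n \<and> x \<bullet> (K *\<^sub>v x) < (\<mu> + e) * (x \<bullet> x)"
    using rayleigh_infimum[OF K n] by blast
  define R where "R = K - \<mu> \<cdot>\<^sub>m 1\<^sub>m n"
  have R: "R \<in> carrier_mat n n" unfolding R_def by (simp add: minus_carrier_mat)
  have "transpose_mat (\<mu> \<cdot>\<^sub>m 1\<^sub>m n) = \<mu> \<cdot>\<^sub>m 1\<^sub>m n" by (auto intro!: eq_matI)
  then have symR: "transpose_mat R = R" using K by (simp add: R_def transpose_minus[of K n n] sym)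
  have Rdot: "x \<bullet> (R *\<^sub>v x) = x \<bullet> (K *\<^sub>v x) - \<mu> * (x \<bullet> x)" if "x \<in> carrier_vec n" for x
    using K that by (simp add: R_def shifted_mat_mult_vec scalar_prod_minus_distrib[of _ n])
  have psdR: "0 \<le> u \<bullet> (R *\<^sub>v u)" if "u \<in> carrier_vec n" for u
    using low[OF that] Rdot[OF that] by simp
  have nearR: "\<exists>x\<in>carrier_vec n. x \<noteq> 0\<^sub>v n \<and> x \<bullet> (R *\<^sub>v x) < e * (x \<bullet> x)" if e: "0 < e" for e
  proof -
    obtain x where x: "x \<in> carrier_vec n" "x \<noteq> 0\<^sub>v n" "x \<bullet> (K *\<^sub>v x) < (\<mu> + e) * (x \<bullet> x)"
      using near[OF e] by blast
    then have "x \<bullet> (R *\<^sub>v x) < e * (x \<bullet> x)" using Rdot[OF x(1)] by (simp add: algebra_simps)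
    with x show ?thesis by blast
  qed
  obtain x where x: "x \<in> carrier_vec n" "x \<noteq> 0\<^sub>v n" "R *\<^sub>v x = 0\<^sub>v n"
    using psd_kernel_nontrivial[OF R symR psdR nearR] by blast
  have "K *\<^sub>v x = \<mu> \<cdot>\<^sub>v x"
  proof (rule eq_vecI)
    fix i assume "i < dim_vec (\<mu> \<cdot>\<^sub>v x)"
    moreover have "(K *\<^sub>v x - \<mu> \<cdot>\<^sub>v x) $ i = 0\<^sub>v n $ i"
      using x(1,3) K by (simp add: R_def shifted_mat_mult_vec)
    ultimately show "(K *\<^sub>v x) $ i = (\<mu> \<cdot>\<^sub>v x) $ i" using x(1) K by simp
  qed (use x(1) K in simp)
  with x low that show thesis by blast
qed

lemma symmetric_max_rayleigh_eigenvector: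
  fixes K :: "real mat"
  assumes K: "K \<in> carrier_mat n n" and sym: "transpose_mat K = K" and n: "0 < n"
  obtains \<mu> x where "x \<in> carrier_vec n" and "x \<noteq> 0\<^sub>v n" and "K *\<^sub>v x = \<mu> \<cdot>\<^sub>v x"
    and "\<And>y. y \<in> carrier_vec n \<Longrightarrow> y \<bullet> (K *\<^sub>v y) \<le> \<mu> * (y \<bullet> y)"
proof -
  have mK: "- K \<in> carrier_mat n n" and sym_mK: "transpose_mat (- K) = - K"
    using K sym by (auto simp: transpose_uminus)
  obtain \<mu> x where x: "x \<in> carrier_vec n" "x \<noteq> 0\<^sub>v n" "(- K) *\<^sub>v x = \<mu> \<cdot>\<^sub>v x"
    and low: "\<And>y. y \<in> carrier_vec n \<Longrightarrow> \<mu> * (y \<bullet> y) \<le> y \<bullet> ((- K) *\<^sub>v y)"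
    using symmetric_min_rayleigh_eigenvector[OF mK sym_mK n] by blast
  have "K *\<^sub>v x = (- \<mu>) \<cdot>\<^sub>v x"
  proof (rule eq_vecI)
    fix i assume "i < dim_vec ((- \<mu>) \<cdot>\<^sub>v x)"
    moreover have "((- K) *\<^sub>v x) $ i = (\<mu> \<cdot>\<^sub>v x) $ i" using x(3) by simp
    ultimately show "(K *\<^sub>v x) $ i = ((- \<mu>) \<cdot>\<^sub>v x) $ i" using x(1) K by simp
  qed (use x(1) K in simp)
  moreover have "y \<bullet> (K *\<^sub>v y) \<le> - \<mu> * (y \<bullet> y)" if "y \<in> carrier_vec n" for y
    using low[OF that] K that by simp
  ultimately show thesis using x that by blast
qed

lemma symmetric_rank_one_update:
  fixes K :: "real mat" and c :: real
  assumes K: "K \<in> carrier_mat n n" and sym: "transpose_mat K = K" and v: "v \<in> carrier_vec n"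
  defines "K' \<equiv> K + mat n n (\<lambda>(i, j). c * v $ i * v $ j)"
  shows "K' \<in> carrier_mat n n" and "transpose_mat K' = K'"
    and "\<And>x. x \<in> carrier_vec n \<Longrightarrow> K' *\<^sub>v x = K *\<^sub>v x + (c * (v \<bullet> x)) \<cdot>\<^sub>v v"
proof -
  define P where "P = mat n n (\<lambda>(i, j). c * v $ i * v $ j)"
  have P: "P \<in> carrier_mat n n" by (simp add: P_def)
  have "transpose_mat P = P" by (intro eq_matI) (simp_all add: P_def)
  then show "K' \<in> carrier_mat n n" and "transpose_mat K' = K'"
    using K P sym by (simp_all add: K'_def P_def[symmetric] transpose_add[of K n n])
  fix x :: "real vec" assume x: "x \<in> carrier_vec n"
  have "P *\<^sub>v x = (c * (v \<bullet> x)) \<cdot>\<^sub>v v"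
    using x v by (intro eq_vecI) (simp_all add: P_def scalar_prod_def sum_distrib_left mult_ac)
  then show "K' *\<^sub>v x = K *\<^sub>v x + (c * (v \<bullet> x)) \<cdot>\<^sub>v v"
    using K P x by (simp add: K'_def P_def[symmetric] add_mult_distrib_mat_vec[of K n n])
qed

text \<open>The rank-one term \<open>c v v\<^sup>T\<close>, with \<open>c |v|\<^sup>2\<close> above every Rayleigh quotient of K, lifts
  the direction v off the bottom of the spectrum and leaves the form unchanged on the
  orthogonal complement of v.\<close>

lemma symmetric_min_rayleigh_eigenvector_orthogonal:
  fixes K :: "real mat"
  assumes K: "K \<in> carrier_mat n n" and sym: "transpose_mat K = K"
    and v: "v \<in> carrier_vec n" and Kv: "K *\<^sub>v v = 0\<^sub>v n"
    and y0: "y0 \<in> carrier_vec n" "y0 \<noteq> 0\<^sub>v n" "v \<bullet> y0 = 0"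
  obtains \<nu> x where "x \<in> carrier_vec n" and "x \<noteq> 0\<^sub>v n" and "v \<bullet> x = 0" and "K *\<^sub>v x = \<nu> \<cdot>\<^sub>v x"
    and "\<And>y. y \<in> carrier_vec n \<Longrightarrow> v \<bullet> y = 0 \<Longrightarrow> \<nu> * (y \<bullet> y) \<le> y \<bullet> (K *\<^sub>v y)"
proof -
  have n: "0 < n" using y0 by (cases n) auto
  obtain B where B: "0 < B" "\<And>x. x \<in> carrier_vec n \<Longrightarrow> \<bar>x \<bullet> (K *\<^sub>v x)\<bar> \<le> B * (x \<bullet> x)"
    using quadratic_form_bound[OF K] by blast
  define c where "c = (B + 1) / (v \<bullet> v)"
  define K' where "K' = K + mat n n (\<lambda>(i, j). c * v $ i * v $ j)"
  note K' = symmetric_rank_one_update[OF K sym v, where c = c, folded K'_def]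
  note K'_vec = K'(3)
  have vK: "v \<bullet> (K *\<^sub>v x) = 0" if "x \<in> carrier_vec n" for x
    using symmetric_mat_scalar_prod[OF K sym v that] Kv that by simp
  obtain \<nu> x where x: "x \<in> carrier_vec n" "x \<noteq> 0\<^sub>v n" "K' *\<^sub>v x = \<nu> \<cdot>\<^sub>v x"
    and low: "\<And>y. y \<in> carrier_vec n \<Longrightarrow> \<nu> * (y \<bullet> y) \<le> y \<bullet> (K' *\<^sub>v y)"
    using symmetric_min_rayleigh_eigenvector[OF K'(1,2) n] by blast
  have K'_perp: "y \<bullet> (K' *\<^sub>v y) = y \<bullet> (K *\<^sub>v y)" if "y \<in> carrier_vec n" "v \<bullet> y = 0" for y
    using that K v by (simp add: K'_vec scalar_prod_add_distrib[of _ n] comm_scalar_prod[of y n v])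
  have vx: "v \<bullet> x = 0"
  proof (rule ccontr)
    assume "v \<bullet> x \<noteq> 0"
    have "\<nu> * (v \<bullet> x) = v \<bullet> (K' *\<^sub>v x)" using x v by simp
    also have "\<dots> = c * (v \<bullet> x) * (v \<bullet> v)"
      using K v x(1) vK[OF x(1)] by (simp add: K'_vec scalar_prod_add_distrib[of _ n])
    finally have "\<nu> = c * (v \<bullet> v)" using \<open>v \<bullet> x \<noteq> 0\<close> by simp
    moreover have "v \<noteq> 0\<^sub>v n" using \<open>v \<bullet> x \<noteq> 0\<close> x by auto
    then have "v \<bullet> v \<noteq> 0" using scalar_prod_self_pos[OF v] by simp
    ultimately have "\<nu> = B + 1" by (simp add: c_def)
    have "(B + 1) * (y0 \<bullet> y0) \<le> y0 \<bullet> (K *\<^sub>v y0)"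
      using low[OF y0(1)] K'_perp[OF y0(1,3)] \<open>\<nu> = B + 1\<close> by simp
    also have "\<dots> \<le> B * (y0 \<bullet> y0)" using B(2)[OF y0(1)] by simp
    finally show False using scalar_prod_self_pos[OF y0(1,2)] by simp
  qed
  have "(c * (v \<bullet> x)) \<cdot>\<^sub>v v = 0\<^sub>v n" using vx v by (intro eq_vecI) auto
  then have "K *\<^sub>v x = \<nu> \<cdot>\<^sub>v x" using x K by (simp add: K'_vec)
  show thesis
  proof (rule that[OF x(1,2) vx \<open>K *\<^sub>v x = \<nu> \<cdot>\<^sub>v x\<close>])
    fix y assume y: "y \<in> carrier_vec n" "v \<bullet> y = 0"
    show "\<nu> * (y \<bullet> y) \<le> y \<bullet> (K *\<^sub>v y)" using low[OF y(1)] K'_perp[OF y] by simp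
  qed
qed

lemma symmetric_eigenvalue_real:
  fixes K :: "real mat" and u :: "complex vec"
  assumes K: "K \<in> carrier_mat n n" and sym: "transpose_mat K = K"
    and u: "u \<in> carrier_vec n" "u \<noteq> 0\<^sub>v n" and eig: "map_mat complex_of_real K *\<^sub>v u = a \<cdot>\<^sub>v u"
  shows "a \<in> \<real>"
proof -
  define T where "T = (\<Sum>i<n. cnj (u $ i) * (\<Sum>j<n. complex_of_real (K $$ (i, j)) * u $ j))"
  define P where "P = (\<Sum>i<n. cnj (u $ i) * u $ i)"
  have Kij: "K $$ (i, j) = K $$ (j, i)" if "i < n" "j < n" for i j
  proof -
    have "transpose_mat K $$ (j, i) = K $$ (j, i)" by (simp add: sym)
    with that K show ?thesis by simp
  qed
  have "(\<Sum>j<n. complex_of_real (K $$ (i, j)) * u $ j) = a * u $ i" if i: "i < n" for i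
    using arg_cong[OF eig, of "\<lambda>v. v $ i"] i K u by (simp add: scalar_prod_def row_def lessThan_atLeast0)
  then have "T = a * P" by (simp add: T_def P_def sum_distrib_left mult_ac)
  have "cnj T = (\<Sum>i<n. \<Sum>j<n. u $ i * complex_of_real (K $$ (i, j)) * cnj (u $ j))"
    by (simp add: T_def cnj_sum sum_distrib_left mult.assoc)
  also have "\<dots> = T"
    unfolding T_def by (subst sum.swap) (simp add: sum_distrib_left Kij mult_ac)
  finally have "cnj T = T" .
  have "\<exists>i<n. u $ i \<noteq> 0"
  proof (rule ccontr)
    assume "\<not> ?thesis"
    then have "u = 0\<^sub>v n" using u(1) by (intro eq_vecI) auto
    with u(2) show False ..
  qed
  then obtain i where i: "i < n" "u $ i \<noteq> 0" by blast
  have "0 < (\<Sum>i<n. (cmod (u $ i))\<^sup>2)"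
    using i by (intro sum_pos2[of _ i]) auto
  moreover have "P = complex_of_real (\<Sum>i<n. (cmod (u $ i))\<^sup>2)"
    unfolding P_def of_real_sum by (intro sum.cong refl) (metis complex_norm_square mult.commute)
  ultimately have "P \<noteq> 0" and "cnj P = P" by (simp_all del: of_real_sum of_real_power)
  moreover have "cnj a * P = a * P"
    using \<open>cnj T = T\<close> \<open>T = a * P\<close> \<open>cnj P = P\<close> by (metis complex_cnj_mult)
  ultimately have "cnj a = a" by simp
  then show ?thesis by (simp add: Reals_cnj_iff)
qed

lemma proots_prod_linear_factors: "proots (\<Prod>r\<leftarrow>rs. [:- r, 1:]) = mset (rs :: real list)"
proof (induction rs)
  case (Cons r rs)
  have "(\<Prod>r\<leftarrow>rs. [:- r, 1:]) \<noteq> (0 :: real poly)" by (auto simp: prod_list_zero_iff)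
  then have "proots (\<Prod>r\<leftarrow>r # rs. [:- r, 1:]) = proots [:- r, 1:] + proots (\<Prod>r\<leftarrow>rs. [:- r, 1:])"
    by (simp only: list.map prod_list.Cons, intro proots_mult) auto
  then show ?case using Cons by (simp add: proots_linear_factor)
qed simp

lemma symmetric_char_poly_splits:
  fixes K :: "real mat"
  assumes K: "K \<in> carrier_mat n n" and sym: "transpose_mat K = K"
  obtains rs where "char_poly K = (\<Prod>r\<leftarrow>rs. [:- r, 1:])" and "length rs = n"
proof -
  define Kc where "Kc = map_mat complex_of_real K"
  have Kc: "Kc \<in> carrier_mat n n" unfolding Kc_def using K by simp
  obtain as where as: "char_poly Kc = (\<Prod>a\<leftarrow>as. [:- a, 1:])" "length as = n"
    using char_poly_factorized[OF Kc] by blast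
  have real: "complex_of_real (Re a) = a" if a: "a \<in> set as" for a
  proof -
    have "poly (char_poly Kc) a = 0" unfolding as(1) using a
      by (simp add: poly_prod_list prod_list_zero_iff)
    then obtain u where "eigenvector Kc u a"
      using eigenvalue_root_char_poly[OF Kc] unfolding eigenvalue_def by blast
    then have "a \<in> \<real>"
      using symmetric_eigenvalue_real[OF K sym] Kc unfolding eigenvector_def Kc_def by blast
    then show ?thesis by (simp add: complex_is_Real_iff complex_eq_iff)
  qed
  define rs where "rs = map Re as"
  interpret of_real_poly_hom: map_poly_inj_idom_hom complex_of_real ..
  have "map_poly complex_of_real (\<Prod>r\<leftarrow>rs. [:- r, 1:]) = (\<Prod>a\<leftarrow>as. [:- a, 1:])"
    using real by (simp add: rs_def of_real_poly_hom.hom_prod_list o_def cong: map_cong)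
  also have "\<dots> = map_poly complex_of_real (char_poly K)"
    unfolding as(1)[symmetric] Kc_def by (rule of_real_hom.char_poly_hom[OF K])
  finally have "char_poly K = (\<Prod>r\<leftarrow>rs. [:- r, 1:])" by simp
  moreover have "length rs = n" unfolding rs_def using as(2) by simp
  ultimately show thesis by (rule that)
qed

lemma symmetric_sorted_eigenvalues:
  fixes K :: "real mat"
  assumes K: "K \<in> carrier_mat n n" and sym: "transpose_mat K = K"
  defines "ev \<equiv> sorted_list_of_multiset (proots (char_poly K))"
  shows "length ev = n"
    and "\<And>\<mu> x. x \<in> carrier_vec n \<Longrightarrow> x \<noteq> 0\<^sub>v n \<Longrightarrow> K *\<^sub>v x = \<mu> \<cdot>\<^sub>v x \<Longrightarrow> \<mu> \<in> set ev"
proof -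
  obtain rs where rs: "char_poly K = (\<Prod>r\<leftarrow>rs. [:- r, 1:])" "length rs = n"
    using symmetric_char_poly_splits[OF K sym] by blast
  have ev: "ev = sorted_list_of_multiset (mset rs)"
    unfolding ev_def rs(1) proots_prod_linear_factors ..
  show "length ev = n" unfolding ev using rs(2) by simp
  fix \<mu> x assume "x \<in> carrier_vec n" "x \<noteq> 0\<^sub>v n" "K *\<^sub>v x = \<mu> \<cdot>\<^sub>v x"
  then have "eigenvalue K \<mu>" unfolding eigenvalue_def eigenvector_def using K by auto
  then have "poly (char_poly K) \<mu> = 0" using eigenvalue_root_char_poly[OF K] by blast
  then show "\<mu> \<in> set ev" unfolding ev rs(1) by (auto simp: poly_prod_list prod_list_zero_iff)
qed

lemma symmetric_rayleigh_le_max_eigenvalue: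
  fixes K :: "real mat"
  assumes K: "K \<in> carrier_mat n n" and sym: "transpose_mat K = K" and n: "0 < n"
    and x: "x \<in> carrier_vec n"
  shows "x \<bullet> (K *\<^sub>v x) \<le> sorted_list_of_multiset (proots (char_poly K)) ! (n - 1) * (x \<bullet> x)"
proof -
  let ?ev = "sorted_list_of_multiset (proots (char_poly K))"
  obtain \<mu> y where y: "y \<in> carrier_vec n" "y \<noteq> 0\<^sub>v n" "K *\<^sub>v y = \<mu> \<cdot>\<^sub>v y"
    and up: "\<And>y. y \<in> carrier_vec n \<Longrightarrow> y \<bullet> (K *\<^sub>v y) \<le> \<mu> * (y \<bullet> y)"
    using symmetric_max_rayleigh_eigenvector[OF K sym n] by blast
  have "\<mu> \<in> set ?ev" using symmetric_sorted_eigenvalues(2)[OF K sym y] .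
  then obtain j where j: "j < n" "?ev ! j = \<mu>"
    using symmetric_sorted_eigenvalues(1)[OF K sym] unfolding in_set_conv_nth by blast
  have "?ev ! j \<le> ?ev ! (n - 1)"
    using j symmetric_sorted_eigenvalues(1)[OF K sym] by (intro sorted_nth_mono) auto
  then have "\<mu> * (x \<bullet> x) \<le> ?ev ! (n - 1) * (x \<bullet> x)"
    using j(2) scalar_prod_self_nonneg[of x] by (simp add: mult_right_mono)
  with up[OF x] show ?thesis by simp
qed

text \<open>The eigenvalue 0 of v is the least one, and the minimum of the Rayleigh quotient on
  the orthogonal complement of v is a positive eigenvalue, hence one of index at least 1.\<close>

lemma symmetric_second_eigenvalue_le_rayleigh:
  fixes K :: "real mat"
  assumes K: "K \<in> carrier_mat n n" and sym: "transpose_mat K = K"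
    and v: "v \<in> carrier_vec n" "v \<noteq> 0\<^sub>v n" and Kv: "K *\<^sub>v v = 0\<^sub>v n"
    and y0: "y0 \<in> carrier_vec n" "y0 \<noteq> 0\<^sub>v n" "v \<bullet> y0 = 0"
    and pos: "\<And>y. y \<in> carrier_vec n \<Longrightarrow> y \<noteq> 0\<^sub>v n \<Longrightarrow> v \<bullet> y = 0 \<Longrightarrow> 0 < y \<bullet> (K *\<^sub>v y)"
    and x: "x \<in> carrier_vec n" and vx: "v \<bullet> x = 0"
  shows "sorted_list_of_multiset (proots (char_poly K)) ! 1 * (x \<bullet> x) \<le> x \<bullet> (K *\<^sub>v x)"
proof -
  let ?ev = "sorted_list_of_multiset (proots (char_poly K))"
  note ev = symmetric_sorted_eigenvalues[OF K sym]
  obtain \<nu> y where y: "y \<in> carrier_vec n" "y \<noteq> 0\<^sub>v n" "v \<bullet> y = 0" "K *\<^sub>v y = \<nu> \<cdot>\<^sub>v y"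
    and low: "\<And>y. y \<in> carrier_vec n \<Longrightarrow> v \<bullet> y = 0 \<Longrightarrow> \<nu> * (y \<bullet> y) \<le> y \<bullet> (K *\<^sub>v y)"
    using symmetric_min_rayleigh_eigenvector_orthogonal[OF K sym v(1) Kv y0] by blast
  have "0 < \<nu> * (y \<bullet> y)" using pos[OF y(1-3)] y by simp
  then have "0 < \<nu>" using scalar_prod_self_nonneg[of y] by (simp add: zero_less_mult_iff)
  obtain j where j: "j < n" "?ev ! j = \<nu>"
    using ev(1) ev(2)[OF y(1,2,4)] unfolding in_set_conv_nth by blast
  have "K *\<^sub>v v = 0 \<cdot>\<^sub>v v" using Kv v by auto
  then obtain i where i: "i < n" "?ev ! i = 0"
    using ev(1) ev(2)[OF v] unfolding in_set_conv_nth by blast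
  have "?ev ! 0 \<le> ?ev ! i" using i ev(1) by (intro sorted_nth_mono) auto
  then have "j \<noteq> 0" using i(2) j(2) \<open>0 < \<nu>\<close> by (cases j) auto
  then have "?ev ! 1 \<le> ?ev ! j" using j ev(1) by (intro sorted_nth_mono) auto
  then have "?ev ! 1 * (x \<bullet> x) \<le> \<nu> * (x \<bullet> x)"
    using j(2) scalar_prod_self_nonneg[of x] by (simp add: mult_right_mono)
  with low[OF x vx] show ?thesis by simp
qed

section \<open>The mass-normalized Laplacian of a weighted graph\<close>

lemma diag_of_carrier [simp]: "diag_of n d \<in> carrier_mat n n"
  and diag_of_dim [simp]: "dim_row (diag_of n d) = n" "dim_col (diag_of n d) = n"
  by (simp_all add: diag_of_def)

lemma transpose_diag_of [simp]: "transpose_mat (diag_of n d) = diag_of n d"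
  by (auto simp: diag_of_def intro!: eq_matI)

lemma diag_of_mult_vec:
  assumes "x \<in> carrier_vec n"
  shows "diag_of n d *\<^sub>v x = vec n (\<lambda>i. d i * x $ i)"
proof (rule eq_vecI)
  fix i assume "i < dim_vec (vec n (\<lambda>i. d i * x $ i))"
  then have i: "i < n" by simp
  have "row (diag_of n d) i = d i \<cdot>\<^sub>v unit_vec n i"
    using i by (auto simp: diag_of_def intro!: eq_vecI)
  then show "(diag_of n d *\<^sub>v x) $ i = vec n (\<lambda>i. d i * x $ i) $ i" using i assms by simp
qed simp

lemma scalar_prod_diag_of:
  assumes "x \<in> carrier_vec n" and "y \<in> carrier_vec n"
  shows "(diag_of n d *\<^sub>v x) \<bullet> y = (\<Sum>i<n. d i * x $ i * y $ i)"
  using assms by (simp add: diag_of_mult_vec scalar_prod_def lessThan_atLeast0)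

lemma diag_of_mult: "diag_of n f * diag_of n g = diag_of n (\<lambda>i. f i * g i)"
proof (rule eq_matI)
  fix i j assume "i < dim_row (diag_of n (\<lambda>i. f i * g i))" "j < dim_col (diag_of n (\<lambda>i. f i * g i))"
  then have ij: "i < n" "j < n" by auto
  have "row (diag_of n f) i = f i \<cdot>\<^sub>v unit_vec n i"
    using ij by (auto simp: diag_of_def intro!: eq_vecI)
  then show "(diag_of n f * diag_of n g) $$ (i, j) = diag_of n (\<lambda>i. f i * g i) $$ (i, j)"
    using ij by (simp add: diag_of_def)
qed auto

lemma diag_of_eq_one: "(\<And>i. i < n \<Longrightarrow> d i = 1) \<Longrightarrow> diag_of n d = 1\<^sub>m n"
  by (auto simp: diag_of_def intro!: eq_matI)

lemma inc_mat_carrier [simp]: "inc_mat N es \<in> carrier_mat N (length es)"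
  and inc_mat_dim [simp]: "dim_row (inc_mat N es) = N" "dim_col (inc_mat N es) = length es"
  by (simp_all add: inc_mat_def)

lemma transpose_inc_mat_mult_vec:
  assumes g: "graph_ok N es" and z: "z \<in> carrier_vec N"
  shows "transpose_mat (inc_mat N es) *\<^sub>v z = vec (length es) (\<lambda>l. z $ fst (es!l) - z $ snd (es!l))"
proof (rule eq_vecI)
  fix l assume "l < dim_vec (vec (length es) (\<lambda>l. z $ fst (es!l) - z $ snd (es!l)))"
  then have l: "l < length es" by simp
  with g have ends: "fst (es!l) < N" "snd (es!l) < N" "fst (es!l) \<noteq> snd (es!l)"
    unfolding graph_ok_def by auto
  have "col (inc_mat N es) l = unit_vec N (fst (es!l)) - unit_vec N (snd (es!l))"
    using l ends by (auto simp: inc_mat_def intro!: eq_vecI)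
  then show "(transpose_mat (inc_mat N es) *\<^sub>v z) $ l = vec (length es) (\<lambda>l. z $ fst (es!l) - z $ snd (es!l)) $ l"
    using l ends z by (simp add: minus_scalar_prod_distrib[of _ N])
qed simp

lemma connected_graph_edge_constant:
  assumes conn: "connected_graph N es"
    and edges: "\<And>l. l < length es \<Longrightarrow> z (fst (es!l)) = z (snd (es!l))"
    and "i < N" and "j < N"
  shows "z i = z j"
proof -
  have step: "z p = z q" if "adjacent es p q" for p q
  proof -
    from that consider "(p, q) \<in> set es" | "(q, p) \<in> set es" unfolding adjacent_def by blast
    then show ?thesis
      by cases (metis edges fst_conv in_set_conv_nth snd_conv)+
  qed
  have "(adjacent es)\<^sup>*\<^sup>* i j" using conn \<open>i < N\<close> \<open>j < N\<close> unfolding connected_graph_def by blast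
  then show ?thesis by induction (auto dest: step)
qed

locale weighted_graph =
  fixes N :: nat and es :: "(nat \<times> nat) list" and w m :: "nat \<Rightarrow> real"
  assumes graph: "graph_ok N es"
    and weight_pos: "\<And>l. l < length es \<Longrightarrow> 0 < w l"
    and mass_pos: "\<And>i. i < N \<Longrightarrow> 0 < m i"
begin

definition edge_diff :: "real vec \<Rightarrow> real vec" where
  "edge_diff y = transpose_mat (inc_mat N es) *\<^sub>v (Minvsqrt N m *\<^sub>v y)"

lemma edge_diff_carrier [simp]: "edge_diff y \<in> carrier_vec (length es)"
  by (simp add: edge_diff_def)

lemma edge_diff_nth:
  assumes y: "y \<in> carrier_vec N" and l: "l < length es"
  shows "edge_diff y $ l = y $ fst (es!l) / sqrt (m (fst (es!l))) - y $ snd (es!l) / sqrt (m (snd (es!l)))"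
proof -
  have "fst (es!l) < N" "snd (es!l) < N" using graph l unfolding graph_ok_def by auto
  then show ?thesis using y l
    by (simp add: edge_diff_def transpose_inc_mat_mult_vec[OF graph] Minvsqrt_def diag_of_mult_vec)
qed

lemma edge_diff_diff:
  assumes "p \<in> carrier_vec N" and "q \<in> carrier_vec N"
  shows "edge_diff (p - q) = edge_diff p - edge_diff q"
  using assms
  by (simp add: edge_diff_def Minvsqrt_def mult_minus_distrib_mat_vec[of _ N N]
      mult_minus_distrib_mat_vec[of _ "length es" N])

definition normalized_laplacian :: "real mat" where
  "normalized_laplacian = Minvsqrt N m * LB N es w * Minvsqrt N m"

lemma LB_carrier [simp]: "LB N es w \<in> carrier_mat N N"
  by (simp add: LB_def Gam_def mult_carrier_mat[of _ N "length es"])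

lemma normalized_laplacian_carrier [simp]: "normalized_laplacian \<in> carrier_mat N N"
  by (simp add: normalized_laplacian_def Minvsqrt_def mult_carrier_mat[of _ N N])

lemma normalized_laplacian_symmetric: "transpose_mat normalized_laplacian = normalized_laplacian"
proof -
  have "transpose_mat (LB N es w) = LB N es w"
    unfolding LB_def by (rule transpose_congruence_symmetric) (auto simp: Gam_def)
  then show ?thesis
    using transpose_congruence_symmetric[of "Minvsqrt N m" N N "LB N es w"]
    by (simp add: normalized_laplacian_def Minvsqrt_def)
qed

lemma normalized_laplacian_mult_vec:
  assumes y: "y \<in> carrier_vec N"
  shows "normalized_laplacian *\<^sub>v y = Minvsqrt N m *\<^sub>v (inc_mat N es *\<^sub>v (Gam es w *\<^sub>v edge_diff y))"
proof -
  let ?A = "inc_mat N es" and ?G = "Gam es w" and ?P = "Minvsqrt N m" and ?L = "LB N es w"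
  have P: "?P \<in> carrier_mat N N" and G: "?G \<in> carrier_mat (length es) (length es)"
    by (simp_all add: Minvsqrt_def Gam_def)
  have Py: "?P *\<^sub>v y \<in> carrier_vec N" using P y by simp
  have "normalized_laplacian *\<^sub>v y = ?P *\<^sub>v (?L *\<^sub>v (?P *\<^sub>v y))"
    unfolding normalized_laplacian_def
    using assoc_mult_mat_vec[OF mult_carrier_mat[OF P LB_carrier] P y] assoc_mult_mat_vec[OF P LB_carrier Py]
    by simp
  also have "?L *\<^sub>v (?P *\<^sub>v y) = ?A *\<^sub>v (?G *\<^sub>v edge_diff y)"
    unfolding LB_def edge_diff_def
    using assoc_mult_mat_vec[OF mult_carrier_mat[OF inc_mat_carrier G] _ Py, of "transpose_mat ?A"]
      assoc_mult_mat_vec[OF inc_mat_carrier G, of "transpose_mat ?A *\<^sub>v (?P *\<^sub>v y)"]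
    by simp
  finally show ?thesis .
qed

lemma normalized_laplacian_form:
  assumes x: "x \<in> carrier_vec N" and y: "y \<in> carrier_vec N"
  shows "x \<bullet> (normalized_laplacian *\<^sub>v y) = (\<Sum>l<length es. w l * edge_diff y $ l * edge_diff x $ l)"
proof -
  let ?A = "inc_mat N es" and ?P = "Minvsqrt N m"
  have g: "Gam es w *\<^sub>v edge_diff y \<in> carrier_vec (length es)" by (simp add: Gam_def)
  have Px: "?P *\<^sub>v x \<in> carrier_vec N" by (simp add: Minvsqrt_def)
  have "x \<bullet> (normalized_laplacian *\<^sub>v y) = (?P *\<^sub>v x) \<bullet> (?A *\<^sub>v (Gam es w *\<^sub>v edge_diff y))"
    using transpose_vec_mult_scalar[of ?P N N _ x] x g
    by (simp add: normalized_laplacian_mult_vec[OF y] Minvsqrt_def)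
  also have "\<dots> = edge_diff x \<bullet> (Gam es w *\<^sub>v edge_diff y)"
    using transpose_vec_mult_scalar[OF inc_mat_carrier g Px] by (simp add: edge_diff_def)
  also have "\<dots> = (Gam es w *\<^sub>v edge_diff y) \<bullet> edge_diff x"
    using g by (intro comm_scalar_prod) simp_all
  also have "\<dots> = (\<Sum>l<length es. w l * edge_diff y $ l * edge_diff x $ l)"
    by (simp add: Gam_def scalar_prod_diag_of)
  finally show ?thesis .
qed

lemma normalized_laplacian_quadratic_form:
  "x \<in> carrier_vec N \<Longrightarrow> x \<bullet> (normalized_laplacian *\<^sub>v x) = (\<Sum>l<length es. w l * (edge_diff x $ l)\<^sup>2)"
  by (simp add: normalized_laplacian_form power2_eq_square mult.assoc)

lemma normalized_laplacian_psd:
  assumes "x \<in> carrier_vec N"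
  shows "0 \<le> x \<bullet> (normalized_laplacian *\<^sub>v x)"
  unfolding normalized_laplacian_quadratic_form[OF assms]
  by (intro sum_nonneg mult_nonneg_nonneg) (auto simp: weight_pos less_imp_le)

definition sqrt_mass :: "real vec" where
  "sqrt_mass = vec N (\<lambda>i. sqrt (m i))"

lemma sqrt_mass_carrier [simp]: "sqrt_mass \<in> carrier_vec N"
  and sqrt_mass_dim [simp]: "dim_vec sqrt_mass = N"
  by (simp_all add: sqrt_mass_def)

lemma sqrt_mass_nonzero: "0 < N \<Longrightarrow> sqrt_mass \<noteq> 0\<^sub>v N"
  using mass_pos[of 0] by (auto simp: sqrt_mass_def dest!: arg_cong[where f = "\<lambda>v. v $ 0"])

lemma edge_diff_sqrt_mass: "edge_diff sqrt_mass = 0\<^sub>v (length es)"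
proof (rule eq_vecI)
  fix l assume "l < dim_vec (0\<^sub>v (length es) :: real vec)"
  then have l: "l < length es" by simp
  then have ends: "fst (es!l) < N" "snd (es!l) < N" using graph unfolding graph_ok_def by auto
  then show "edge_diff sqrt_mass $ l = 0\<^sub>v (length es) $ l"
    using l mass_pos[OF ends(1)] mass_pos[OF ends(2)] by (simp add: edge_diff_nth sqrt_mass_def)
qed simp

lemma normalized_laplacian_sqrt_mass: "normalized_laplacian *\<^sub>v sqrt_mass = 0\<^sub>v N"
  by (simp add: normalized_laplacian_mult_vec edge_diff_sqrt_mass Gam_def Minvsqrt_def)

text \<open>Conjugation by \<open>M\<^sup>1\<^sup>/\<^sup>2\<close> turns \<open>M\<^sup>-\<^sup>1 L\<^sub>B\<close> into the symmetric matrix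
  \<open>M\<^sup>-\<^sup>1\<^sup>/\<^sup>2 L\<^sub>B M\<^sup>-\<^sup>1\<^sup>/\<^sup>2\<close>, so both have the eigenvalues \<open>\<lambda>\<^sub>i\<close>.\<close>

lemma char_poly_Minv_LB: "char_poly (Minv N m * LB N es w) = char_poly normalized_laplacian"
proof (rule char_poly_similar)
  let ?P = "Minvsqrt N m" and ?Q = "Msqrt N m"
  have m0: "m i \<noteq> 0" if "i < N" for i using mass_pos[OF that] by simp
  have PQ: "?P * ?Q = 1\<^sub>m N" and QP: "?Q * ?P = 1\<^sub>m N"
    unfolding Minvsqrt_def Msqrt_def diag_of_mult using m0 by (auto intro!: diag_of_eq_one)
  have PP: "?P * ?P = Minv N m"
    unfolding Minvsqrt_def Minv_def diag_of_mult using mass_pos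
    by (auto simp: diag_of_def real_sqrt_mult[symmetric] less_imp_le intro!: eq_matI)
  have P: "?P \<in> carrier_mat N N" and Q: "?Q \<in> carrier_mat N N"
    by (simp_all add: Minvsqrt_def Msqrt_def)
  have "?P * normalized_laplacian * ?Q = (?P * ?P) * LB N es w * (?P * ?Q)"
    unfolding normalized_laplacian_def using P Q
    by (simp add: assoc_mult_mat[of _ N N _ N _ N] mult_carrier_mat[of _ N N _ N])
  then have "Minv N m * LB N es w = ?P * normalized_laplacian * ?Q"
    by (simp add: PP PQ Minv_def right_mult_one_mat[of _ N N] mult_carrier_mat[of _ N N _ N])
  then show "similar_mat (Minv N m * LB N es w) normalized_laplacian"
    unfolding similar_mat_def similar_mat_wit_def Let_def
    using PQ QP by (intro exI[of _ ?P] exI[of _ ?Q]) (auto simp: Minvsqrt_def Msqrt_def Minv_def)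
qed

lemma lambdaN_rayleigh:
  assumes "0 < N" and "x \<in> carrier_vec N"
  shows "x \<bullet> (normalized_laplacian *\<^sub>v x) \<le> lambdaN N es w m * (x \<bullet> x)"
  unfolding lambdaN_def eigs_def char_poly_Minv_LB
  by (rule symmetric_rayleigh_le_max_eigenvalue[OF normalized_laplacian_carrier normalized_laplacian_symmetric assms])

end

locale connected_weighted_graph = weighted_graph +
  assumes connected: "connected_graph N es"
begin

lemma normalized_laplacian_kernel:
  assumes x: "x \<in> carrier_vec N" and zero: "x \<bullet> (normalized_laplacian *\<^sub>v x) = 0"
  obtains c where "x = c \<cdot>\<^sub>v sqrt_mass"
proof -
  have "(\<Sum>l<length es. w l * (edge_diff x $ l)\<^sup>2) = 0"
    using zero by (simp add: normalized_laplacian_quadratic_form[OF x])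
  then have sq0: "w l * (edge_diff x $ l)\<^sup>2 = 0" if "l < length es" for l
    using that weight_pos by (subst (asm) sum_nonneg_eq_0_iff) (auto simp: less_imp_le)
  have flat: "edge_diff x $ l = 0" if "l < length es" for l
    using sq0[OF that] weight_pos[OF that] by simp
  define z where "z i = x $ i / sqrt (m i)" for i
  have edges: "z (fst (es!l)) = z (snd (es!l))" if "l < length es" for l
    using flat[OF that] edge_diff_nth[OF x that] by (simp add: z_def)
  have const: "z i = z 0" if "i < N" for i
    using connected_graph_edge_constant[OF connected edges that, of 0] that by simp
  have "x = z 0 \<cdot>\<^sub>v sqrt_mass"
  proof (rule eq_vecI)
    fix i assume "i < dim_vec (z 0 \<cdot>\<^sub>v sqrt_mass)"
    then have i: "i < N" by simp
    have "x $ i = z i * sqrt (m i)" using mass_pos[OF i] by (simp add: z_def)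
    then show "x $ i = (z 0 \<cdot>\<^sub>v sqrt_mass) $ i" using i const[OF i] by (simp add: sqrt_mass_def)
  qed (use x in simp)
  then show thesis by (rule that)
qed

lemma normalized_laplacian_pos_on_perp:
  assumes y: "y \<in> carrier_vec N" "y \<noteq> 0\<^sub>v N" and perp: "sqrt_mass \<bullet> y = 0"
  shows "0 < y \<bullet> (normalized_laplacian *\<^sub>v y)"
proof (rule ccontr)
  assume "\<not> ?thesis"
  with normalized_laplacian_psd[OF y(1)] have "y \<bullet> (normalized_laplacian *\<^sub>v y) = 0" by simp
  then obtain c where c: "y = c \<cdot>\<^sub>v sqrt_mass" using normalized_laplacian_kernel[OF y(1)] by blast
  have "0 < N" using y by (cases N) auto
  then have "0 < sqrt_mass \<bullet> sqrt_mass" using scalar_prod_self_pos[OF sqrt_mass_carrier] sqrt_mass_nonzero by blast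
  moreover have "c * (sqrt_mass \<bullet> sqrt_mass) = 0" using perp by (simp add: c)
  ultimately have "y = 0 \<cdot>\<^sub>v sqrt_mass" using c by simp
  moreover have "0 \<cdot>\<^sub>v sqrt_mass = 0\<^sub>v N" by (intro eq_vecI) simp_all
  ultimately show False using y(2) by simp
qed

lemma lambda2_rayleigh:
  assumes y0: "y0 \<in> carrier_vec N" "y0 \<noteq> 0\<^sub>v N" "sqrt_mass \<bullet> y0 = 0"
    and x: "x \<in> carrier_vec N" "sqrt_mass \<bullet> x = 0"
  shows "lambda2 N es w m * (x \<bullet> x) \<le> x \<bullet> (normalized_laplacian *\<^sub>v x)"
proof -
  have "0 < N" using y0 by (cases N) auto
  show ?thesis
    unfolding lambda2_def eigs_def char_poly_Minv_LB
    by (rule symmetric_second_eigenvalue_le_rayleigh[OF normalized_laplacian_carrier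
          normalized_laplacian_symmetric sqrt_mass_carrier sqrt_mass_nonzero[OF \<open>0 < N\<close>]
          normalized_laplacian_sqrt_mass y0 normalized_laplacian_pos_on_perp x])
qed

end

section \<open>Scalar estimates\<close>

lemma cos_Taylor_second_order:
  fixes a b :: real
  obtains t where "min a b \<le> t" and "t \<le> max a b"
    and "cos b - cos a - sin b * (a - b) = cos t / 2 * (a - b)\<^sup>2"
proof (cases "a = b")
  case True
  then show thesis by (intro that[of a]) auto
next
  case False
  define d where "d = (\<lambda>(m :: nat) (t :: real). if m = 0 then cos t else if m = 1 then - sin t else - cos t)"
  have "\<forall>m t. m < 2 \<and> min a b \<le> t \<and> t \<le> max a b \<longrightarrow> DERIV (d m) t :> d (Suc m) t"
    by (auto simp: d_def less_2_cases_iff intro!: derivative_eq_intros)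
  then obtain t where t: "if a < b then a < t \<and> t < b else b < t \<and> t < a"
    and taylor: "cos a = (\<Sum>m<2. d m b / fact m * (a - b) ^ m) + d 2 t / fact 2 * (a - b) ^ 2"
    using Taylor[of 2 d cos "min a b" "max a b" b a] False by (auto simp: d_def fun_eq_iff)
  show thesis
  proof (rule that[of t])
    show "min a b \<le> t" "t \<le> max a b" using t by (auto split: if_splits)
    show "cos b - cos a - sin b * (a - b) = cos t / 2 * (a - b)\<^sup>2"
      using taylor by (simp add: d_def numeral_2_eq_2)
  qed
qed

lemma sin_le_cos:
  fixes t \<rho> :: real
  assumes "0 \<le> \<rho>" and "\<bar>t\<bar> \<le> pi / 2 - \<rho>"
  shows "sin \<rho> \<le> cos t"
proof -
  have "cos (pi / 2 - \<rho>) \<le> cos \<bar>t\<bar>" using assms by (intro cos_monotone_0_pi_le) auto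
  then show ?thesis by (simp add: cos_diff)
qed

lemma cos_Bregman_bounds:
  fixes a b \<rho> :: real
  assumes "0 \<le> \<rho>" and "\<bar>a\<bar> \<le> pi / 2 - \<rho>" and "\<bar>b\<bar> \<le> pi / 2 - \<rho>"
  shows "sin \<rho> / 2 * (a - b)\<^sup>2 \<le> cos b - cos a - sin b * (a - b)"
    and "cos b - cos a - sin b * (a - b) \<le> (a - b)\<^sup>2 / 2"
proof -
  obtain t where t: "min a b \<le> t" "t \<le> max a b"
    and eq: "cos b - cos a - sin b * (a - b) = cos t / 2 * (a - b)\<^sup>2"
    by (rule cos_Taylor_second_order)
  have "sin \<rho> \<le> cos t" using t assms by (intro sin_le_cos) auto
  then show "sin \<rho> / 2 * (a - b)\<^sup>2 \<le> cos b - cos a - sin b * (a - b)"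
    unfolding eq by (intro mult_right_mono) auto
  show "cos b - cos a - sin b * (a - b) \<le> (a - b)\<^sup>2 / 2"
    unfolding eq using mult_right_mono[OF cos_le_one[of t] zero_le_power2[of "a - b"]] by simp
qed

lemma sin_diff_sq_le: "(sin a - sin b)\<^sup>2 \<le> (a - b :: real)\<^sup>2"
proof -
  have "\<bar>sin a - sin b\<bar> = 2 * \<bar>sin ((a - b) / 2)\<bar> * \<bar>cos ((a + b) / 2)\<bar>"
    by (simp add: sin_diff_sin abs_mult)
  also have "\<dots> \<le> 2 * \<bar>(a - b) / 2\<bar> * 1"
    by (intro mult_mono abs_sin_x_le_abs_x) auto
  finally show ?thesis by (simp add: abs_le_square_iff)
qed

lemma abs_mult_le_Young:
  fixes x g c \<eta> :: real
  assumes "x\<^sup>2 \<le> g * c" and "0 \<le> g" and "0 \<le> c"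
  shows "\<bar>\<eta> * x\<bar> \<le> \<eta>\<^sup>2 * g + c / 4"
proof (rule power2_le_imp_le)
  have "\<bar>\<eta> * x\<bar>\<^sup>2 \<le> \<eta>\<^sup>2 * (g * c)" using assms(1) by (simp add: power_mult_distrib mult_left_mono)
  also have "\<dots> \<le> (\<eta>\<^sup>2 * g + c / 4)\<^sup>2"
    using zero_le_power2[of "\<eta>\<^sup>2 * g - c / 4"] by (simp add: power2_eq_square algebra_simps)
  finally show "\<bar>\<eta> * x\<bar>\<^sup>2 \<le> (\<eta>\<^sup>2 * g + c / 4)\<^sup>2" .
qed (use assms in simp)

lemma Lyapunov_sandwich:
  fixes W B X Q G C D l2 lN s k \<eta> :: real
  assumes k: "0 < k" and s: "0 \<le> s"
    and B: "s / 2 * Q \<le> B" "B \<le> Q / 2" and Q: "l2 * D \<le> Q" "Q \<le> lN * D"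
    and X: "X\<^sup>2 \<le> G * C" and G: "0 \<le> G" "G \<le> lN\<^sup>2 * D" and C: "0 \<le> C" "C \<le> W"
  shows "W / 2 + k * B + \<eta> * X \<le> 3/4 * W + (1/2 * k * lN + \<eta>\<^sup>2 * lN\<^sup>2) * D"
    and "1/4 * W + (1/2 * k * l2 * s - \<eta>\<^sup>2 * lN\<^sup>2) * D \<le> W / 2 + k * B + \<eta> * X"
proof -
  have "\<bar>\<eta> * X\<bar> \<le> \<eta>\<^sup>2 * G + C / 4" by (rule abs_mult_le_Young[OF X G(1) C(1)])
  moreover have "\<eta>\<^sup>2 * G \<le> \<eta>\<^sup>2 * (lN\<^sup>2 * D)" using G(2) by (simp add: mult_left_mono)
  ultimately have cross: "\<bar>\<eta> * X\<bar> \<le> \<eta>\<^sup>2 * lN\<^sup>2 * D + W / 4" using C(2) by simp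
  have "k * B \<le> k * (lN * D / 2)" using B(2) Q(2) k by simp
  then show "W / 2 + k * B + \<eta> * X \<le> 3/4 * W + (1/2 * k * lN + \<eta>\<^sup>2 * lN\<^sup>2) * D"
    using cross by (simp add: algebra_simps abs_le_iff)
  have "s / 2 * (l2 * D) \<le> s / 2 * Q" using Q(1) s by (simp add: mult_left_mono)
  with B(1) have "s / 2 * (l2 * D) \<le> B" by simp
  then have "k * (s / 2 * (l2 * D)) \<le> k * B" using k by simp
  then show "1/4 * W + (1/2 * k * l2 * s - \<eta>\<^sup>2 * lN\<^sup>2) * D \<le> W / 2 + k * B + \<eta> * X"
    using cross by (simp add: algebra_simps abs_le_iff)
qed

section \<open>The potential in reduced angle coordinates\<close>

locale reduced_coordinates = weighted_graph +
  fixes Y :: "real mat"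
  assumes Y_carrier: "Y \<in> carrier_mat N (N - 1)"
    and Y_orthonormal: "transpose_mat Y * Y = 1\<^sub>m (N - 1)"
    and sqrt_mass_perp_cols: "\<And>j. j < N - 1 \<Longrightarrow> sqrt_mass \<bullet> col Y j = 0"
begin

lemma Y_isometry:
  assumes u: "u \<in> carrier_vec (N - 1)"
  shows "(Y *\<^sub>v u) \<bullet> (Y *\<^sub>v u) = u \<bullet> u"
proof -
  have "(Y *\<^sub>v u) \<bullet> (Y *\<^sub>v u) = (transpose_mat Y *\<^sub>v (Y *\<^sub>v u)) \<bullet> u"
    using transpose_vec_mult_scalar[OF Y_carrier u] Y_carrier u by simp
  also have "transpose_mat Y *\<^sub>v (Y *\<^sub>v u) = u"
    using assoc_mult_mat_vec[of "transpose_mat Y" "N - 1" N Y "N - 1" u] Y_carrier u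
    by (simp add: Y_orthonormal)
  finally show ?thesis .
qed

lemma transpose_Y_contraction:
  assumes p: "p \<in> carrier_vec N"
  shows "(transpose_mat Y *\<^sub>v p) \<bullet> (transpose_mat Y *\<^sub>v p) \<le> p \<bullet> p"
proof (rule square_le_mult_imp_le)
  let ?c = "transpose_mat Y *\<^sub>v p"
  have c: "?c \<in> carrier_vec (N - 1)" using Y_carrier p by simp
  have "?c \<bullet> ?c = p \<bullet> (Y *\<^sub>v ?c)" by (rule transpose_vec_mult_scalar[OF Y_carrier c p])
  then have "(?c \<bullet> ?c)\<^sup>2 \<le> (p \<bullet> p) * ((Y *\<^sub>v ?c) \<bullet> (Y *\<^sub>v ?c))"
    using scalar_prod_Cauchy_Schwarz[OF p, of "Y *\<^sub>v ?c"] Y_carrier c by simp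
  then show "(?c \<bullet> ?c)\<^sup>2 \<le> (p \<bullet> p) * (?c \<bullet> ?c)" by (simp add: Y_isometry[OF c])
qed (rule scalar_prod_self_nonneg)

lemma sqrt_mass_perp_Y:
  assumes u: "u \<in> carrier_vec (N - 1)"
  shows "sqrt_mass \<bullet> (Y *\<^sub>v u) = 0"
proof -
  have "transpose_mat Y *\<^sub>v sqrt_mass = 0\<^sub>v (N - 1)"
  proof (rule eq_vecI)
    fix j assume "j < dim_vec (0\<^sub>v (N - 1) :: real vec)"
    then have j: "j < N - 1" by simp
    then have "(transpose_mat Y *\<^sub>v sqrt_mass) $ j = col Y j \<bullet> sqrt_mass" using Y_carrier by simp
    also have "\<dots> = sqrt_mass \<bullet> col Y j" using j Y_carrier by (intro comm_scalar_prod[of _ N]) auto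
    finally show "(transpose_mat Y *\<^sub>v sqrt_mass) $ j = 0\<^sub>v (N - 1) $ j"
      using sqrt_mass_perp_cols[OF j] j by simp
  qed (use Y_carrier in simp)
  then show ?thesis
    using transpose_vec_mult_scalar[OF Y_carrier u sqrt_mass_carrier] u by simp
qed

lemma edge_angles_eq:
  assumes "th \<in> carrier_vec (N - 1)"
  shows "edge_angles N es m Y th = edge_diff (Y *\<^sub>v th)"
proof -
  have P: "Minvsqrt N m \<in> carrier_mat N N" by (simp add: Minvsqrt_def)
  have AP: "transpose_mat (inc_mat N es) * Minvsqrt N m \<in> carrier_mat (length es) N"
    using P by (simp add: mult_carrier_mat[of _ "length es" N])
  have Yth: "Y *\<^sub>v th \<in> carrier_vec N" using Y_carrier assms by simp
  have "edge_angles N es m Y th = (transpose_mat (inc_mat N es) * Minvsqrt N m) *\<^sub>v (Y *\<^sub>v th)"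
    unfolding edge_angles_def by (rule assoc_mult_mat_vec[OF AP Y_carrier assms])
  also have "\<dots> = edge_diff (Y *\<^sub>v th)"
    unfolding edge_diff_def by (rule assoc_mult_mat_vec[of _ "length es" N _ N, OF _ P Yth]) simp
  finally show ?thesis .
qed

lemma Upot_eq: "Upot N es w m Y th = - (\<Sum>l<length es. w l * cos (edge_angles N es m Y th $ l))"
proof -
  have "edge_angles N es m Y th \<in> carrier_vec (length es)" by (simp add: edge_angles_def)
  then show ?thesis
    by (simp add: Upot_def Gam_def diag_of_mult_vec scalar_prod_def lessThan_atLeast0 mult.commute)
qed

lemma gradU_scalar_prod:
  assumes z: "z \<in> carrier_vec (N - 1)"
  shows "gradU N es w m Y th \<bullet> z = (\<Sum>l<length es. w l * sin (edge_angles N es m Y th $ l) * edge_diff (Y *\<^sub>v z) $ l)"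
proof -
  let ?s = "map_vec sin (edge_angles N es m Y th)" and ?A = "inc_mat N es" and ?P = "Minvsqrt N m"
  have s: "?s \<in> carrier_vec (length es)" by (simp add: edge_angles_def)
  have g: "Gam es w *\<^sub>v ?s \<in> carrier_vec (length es)" by (simp add: Gam_def)
  have P: "?P \<in> carrier_mat N N" by (simp add: Minvsqrt_def)
  have Yz: "Y *\<^sub>v z \<in> carrier_vec N" using Y_carrier z by simp
  have YP: "transpose_mat Y * ?P \<in> carrier_mat (N - 1) N"
    using Y_carrier P by (simp add: mult_carrier_mat[of _ "N - 1" N])
  have YPA: "transpose_mat Y * ?P * ?A \<in> carrier_mat (N - 1) (length es)"
    using YP by (simp add: mult_carrier_mat[of _ "N - 1" N])
  have "gradU N es w m Y th = transpose_mat Y *\<^sub>v (?P *\<^sub>v (?A *\<^sub>v (Gam es w *\<^sub>v ?s)))"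
    unfolding gradU_def
    using assoc_mult_mat_vec[OF YPA _ s, of "Gam es w"] assoc_mult_mat_vec[OF YP inc_mat_carrier g]
      assoc_mult_mat_vec[of "transpose_mat Y" "N - 1" N ?P N] Y_carrier P g
    by (simp add: Gam_def)
  then have "gradU N es w m Y th \<bullet> z = (?P *\<^sub>v (?A *\<^sub>v (Gam es w *\<^sub>v ?s))) \<bullet> (Y *\<^sub>v z)"
    using transpose_vec_mult_scalar[OF Y_carrier z] P g by simp
  also have "\<dots> = (?A *\<^sub>v (Gam es w *\<^sub>v ?s)) \<bullet> (?P *\<^sub>v (Y *\<^sub>v z))"
    using transpose_vec_mult_scalar[OF P Yz, of "?A *\<^sub>v (Gam es w *\<^sub>v ?s)"] P g
    by (simp add: Minvsqrt_def)
  also have "\<dots> = (?P *\<^sub>v (Y *\<^sub>v z)) \<bullet> (?A *\<^sub>v (Gam es w *\<^sub>v ?s))"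
    using P g Yz by (intro comm_scalar_prod[of _ N]) simp_all
  also have "\<dots> = edge_diff (Y *\<^sub>v z) \<bullet> (Gam es w *\<^sub>v ?s)"
    using transpose_vec_mult_scalar[OF inc_mat_carrier g, of "?P *\<^sub>v (Y *\<^sub>v z)"] P Yz
    by (simp add: edge_diff_def)
  also have "\<dots> = (Gam es w *\<^sub>v ?s) \<bullet> edge_diff (Y *\<^sub>v z)"
    using g by (intro comm_scalar_prod) simp_all
  also have "\<dots> = (\<Sum>l<length es. w l * sin (edge_angles N es m Y th $ l) * edge_diff (Y *\<^sub>v z) $ l)"
    using s by (simp add: Gam_def scalar_prod_diag_of edge_angles_def)
  finally show ?thesis .
qed

lemma transpose_Y_Msqrt_sq_le:
  assumes d: "d \<in> carrier_vec N"
  shows "(transpose_mat Y * Msqrt N m *\<^sub>v d) \<bullet> (transpose_mat Y * Msqrt N m *\<^sub>v d) \<le> d \<bullet> (Mmat N m *\<^sub>v d)"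
proof -
  have Md: "Msqrt N m *\<^sub>v d \<in> carrier_vec N" by (simp add: Msqrt_def)
  have sq: "sqrt (m i) * d $ i * (sqrt (m i) * d $ i) = d $ i * (m i * d $ i)" if "i < N" for i
  proof -
    have "sqrt (m i) * d $ i * (sqrt (m i) * d $ i) = (sqrt (m i))\<^sup>2 * (d $ i * d $ i)"
      by (simp add: power2_eq_square mult_ac)
    then show ?thesis using mass_pos[OF that] by (simp add: mult_ac)
  qed
  have "(Msqrt N m *\<^sub>v d) \<bullet> (Msqrt N m *\<^sub>v d) = d \<bullet> (Mmat N m *\<^sub>v d)"
    using d by (simp add: Msqrt_def Mmat_def diag_of_mult_vec scalar_prod_def sq)
  moreover have "transpose_mat Y * Msqrt N m *\<^sub>v d = transpose_mat Y *\<^sub>v (Msqrt N m *\<^sub>v d)"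
    using Y_carrier d by (intro assoc_mult_mat_vec[of _ "N - 1" N _ N]) (simp_all add: Msqrt_def)
  ultimately show ?thesis using transpose_Y_contraction[OF Md] by simp
qed

lemma gradU_carrier [simp]: "gradU N es w m Y th \<in> carrier_vec (N - 1)"
  using Y_carrier by (simp add: gradU_def)

lemma laplacian_form_edge_angles:
  assumes th: "th \<in> carrier_vec (N - 1)" and ths: "ths \<in> carrier_vec (N - 1)"
  shows "(Y *\<^sub>v (th - ths)) \<bullet> (normalized_laplacian *\<^sub>v (Y *\<^sub>v (th - ths)))
      = (\<Sum>l<length es. w l * (edge_angles N es m Y th $ l - edge_angles N es m Y ths $ l)\<^sup>2)"
proof -
  have "Y *\<^sub>v (th - ths) = Y *\<^sub>v th - Y *\<^sub>v ths"
    using Y_carrier th ths by (simp add: mult_minus_distrib_mat_vec)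
  moreover have "Y *\<^sub>v th \<in> carrier_vec N" "Y *\<^sub>v ths \<in> carrier_vec N" using Y_carrier th ths by simp_all
  ultimately have "edge_diff (Y *\<^sub>v (th - ths)) = edge_angles N es m Y th - edge_angles N es m Y ths"
    by (simp add: edge_diff_diff edge_angles_eq[OF th] edge_angles_eq[OF ths])
  moreover have "Y *\<^sub>v (th - ths) \<in> carrier_vec N" using Y_carrier th ths by simp
  ultimately show ?thesis
    by (simp add: normalized_laplacian_quadratic_form edge_angles_def)
qed

lemma Upot_Bregman_bounds:
  assumes \<rho>: "0 \<le> \<rho>" and th: "th \<in> Sset N es m Y \<rho>" and ths: "ths \<in> Sset N es m Y \<rho>"
  defines "Q \<equiv> (Y *\<^sub>v (th - ths)) \<bullet> (normalized_laplacian *\<^sub>v (Y *\<^sub>v (th - ths)))"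
  shows "sin \<rho> / 2 * Q \<le> Upot N es w m Y th - Upot N es w m Y ths - gradU N es w m Y ths \<bullet> (th - ths)"
    and "Upot N es w m Y th - Upot N es w m Y ths - gradU N es w m Y ths \<bullet> (th - ths) \<le> Q / 2"
proof -
  let ?a = "edge_angles N es m Y th" and ?b = "edge_angles N es m Y ths"
  define bregman where "bregman l = cos (?b $ l) - cos (?a $ l) - sin (?b $ l) * (?a $ l - ?b $ l)" for l
  have thc: "th \<in> carrier_vec (N - 1)" and ths_c: "ths \<in> carrier_vec (N - 1)"
    using th ths by (simp_all add: Sset_def)
  have angles: "\<bar>?a $ l\<bar> \<le> pi / 2 - \<rho>" "\<bar>?b $ l\<bar> \<le> pi / 2 - \<rho>" if "l < length es" for l
    using th ths that by (auto simp: Sset_def less_imp_le)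
  have Q: "Q = (\<Sum>l<length es. w l * (?a $ l - ?b $ l)\<^sup>2)"
    unfolding Q_def by (rule laplacian_form_edge_angles[OF thc ths_c])
  have "Y *\<^sub>v (th - ths) \<in> carrier_vec N" "Y *\<^sub>v th \<in> carrier_vec N" "Y *\<^sub>v ths \<in> carrier_vec N"
    using Y_carrier thc ths_c by simp_all
  then have "edge_diff (Y *\<^sub>v (th - ths)) = ?a - ?b"
    using Y_carrier thc ths_c
    by (simp add: mult_minus_distrib_mat_vec edge_diff_diff edge_angles_eq[OF thc] edge_angles_eq[OF ths_c])
  then have "gradU N es w m Y ths \<bullet> (th - ths) = (\<Sum>l<length es. w l * sin (?b $ l) * (?a $ l - ?b $ l))"
    using thc ths_c by (simp add: gradU_scalar_prod edge_angles_def)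
  then have gap: "Upot N es w m Y th - Upot N es w m Y ths - gradU N es w m Y ths \<bullet> (th - ths)
      = (\<Sum>l<length es. w l * bregman l)"
    by (simp add: Upot_eq bregman_def sum_subtractf[symmetric] algebra_simps)
  show "sin \<rho> / 2 * Q \<le> Upot N es w m Y th - Upot N es w m Y ths - gradU N es w m Y ths \<bullet> (th - ths)"
    unfolding gap Q sum_distrib_left
    using cos_Bregman_bounds(1)[OF \<rho> angles] weight_pos
    by (intro sum_mono) (simp add: bregman_def mult.left_commute less_imp_le mult_left_mono)
  show "Upot N es w m Y th - Upot N es w m Y ths - gradU N es w m Y ths \<bullet> (th - ths) \<le> Q / 2"
    unfolding gap Q sum_divide_distrib
    using cos_Bregman_bounds(2)[OF \<rho> angles] weight_pos
    by (intro sum_mono) (simp add: bregman_def less_imp_le mult_left_mono)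
qed

lemma sin_edge_angles_diff_bound:
  assumes N: "0 < N" and th: "th \<in> carrier_vec (N - 1)" and ths: "ths \<in> carrier_vec (N - 1)"
  shows "(\<Sum>l<length es. w l * (sin (edge_angles N es m Y th $ l) - sin (edge_angles N es m Y ths $ l))\<^sup>2)
      \<le> lambdaN N es w m * ((th - ths) \<bullet> (th - ths))"
proof -
  let ?a = "edge_angles N es m Y th" and ?b = "edge_angles N es m Y ths"
  have Yd: "Y *\<^sub>v (th - ths) \<in> carrier_vec N" using Y_carrier th ths by simp
  have "(\<Sum>l<length es. w l * (sin (?a $ l) - sin (?b $ l))\<^sup>2) \<le> (\<Sum>l<length es. w l * (?a $ l - ?b $ l)\<^sup>2)"
    using weight_pos sin_diff_sq_le by (intro sum_mono mult_left_mono) (auto simp: less_imp_le)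
  also have "\<dots> = (Y *\<^sub>v (th - ths)) \<bullet> (normalized_laplacian *\<^sub>v (Y *\<^sub>v (th - ths)))"
    by (rule laplacian_form_edge_angles[OF th ths, symmetric])
  also have "\<dots> \<le> lambdaN N es w m * ((th - ths) \<bullet> (th - ths))"
    using lambdaN_rayleigh[OF N Yd] Y_isometry th ths by simp
  finally show ?thesis .
qed

lemma gradU_diff_bound:
  assumes N: "0 < N" and th: "th \<in> carrier_vec (N - 1)" and ths: "ths \<in> carrier_vec (N - 1)"
  defines "g \<equiv> gradU N es w m Y th - gradU N es w m Y ths"
  shows "g \<bullet> g \<le> (lambdaN N es w m)\<^sup>2 * ((th - ths) \<bullet> (th - ths))"
proof (rule square_le_mult_imp_le)
  let ?a = "edge_angles N es m Y th" and ?b = "edge_angles N es m Y ths" and ?lN = "lambdaN N es w m"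
  define e where "e = edge_diff (Y *\<^sub>v g)"
  have g: "g \<in> carrier_vec (N - 1)"
    using gradU_carrier[of th] gradU_carrier[of ths] by (simp add: g_def)
  have Yg: "Y *\<^sub>v g \<in> carrier_vec N" using Y_carrier g by simp
  have "g \<bullet> g = gradU N es w m Y th \<bullet> g - gradU N es w m Y ths \<bullet> g"
    unfolding g_def by (rule minus_scalar_prod_distrib[OF gradU_carrier gradU_carrier g[unfolded g_def]])
  also have "\<dots> = (\<Sum>l<length es. w l * (sin (?a $ l) - sin (?b $ l)) * e $ l)"
    using g by (simp add: gradU_scalar_prod e_def sum_subtractf[symmetric] algebra_simps)
  finally have gg: "g \<bullet> g = (\<Sum>l<length es. w l * (sin (?a $ l) - sin (?b $ l)) * e $ l)" .
  have "(g \<bullet> g)\<^sup>2 \<le> (\<Sum>l<length es. w l * (sin (?a $ l) - sin (?b $ l))\<^sup>2) * (\<Sum>l<length es. w l * (e $ l)\<^sup>2)"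
    unfolding gg by (rule weighted_Cauchy_Schwarz) (simp add: weight_pos less_imp_le)
  also have "\<dots> \<le> (?lN * ((th - ths) \<bullet> (th - ths))) * (?lN * (g \<bullet> g))"
  proof (rule mult_mono)
    show "(\<Sum>l<length es. w l * (sin (?a $ l) - sin (?b $ l))\<^sup>2) \<le> ?lN * ((th - ths) \<bullet> (th - ths))"
      by (rule sin_edge_angles_diff_bound[OF N th ths])
    moreover have "0 \<le> (\<Sum>l<length es. w l * (sin (?a $ l) - sin (?b $ l))\<^sup>2)"
      using weight_pos by (intro sum_nonneg mult_nonneg_nonneg) (auto simp: less_imp_le)
    ultimately show "0 \<le> ?lN * ((th - ths) \<bullet> (th - ths))" by linarith
    show "(\<Sum>l<length es. w l * (e $ l)\<^sup>2) \<le> ?lN * (g \<bullet> g)"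
      using lambdaN_rayleigh[OF N Yg] Y_isometry[OF g] by (simp add: e_def normalized_laplacian_quadratic_form[OF Yg])
    show "0 \<le> (\<Sum>l<length es. w l * (e $ l)\<^sup>2)"
      using weight_pos by (intro sum_nonneg mult_nonneg_nonneg) (auto simp: less_imp_le)
  qed
  finally show "(g \<bullet> g)\<^sup>2 \<le> ?lN\<^sup>2 * ((th - ths) \<bullet> (th - ths)) * (g \<bullet> g)"
    by (simp add: power2_eq_square mult_ac)
  show "0 \<le> ?lN\<^sup>2 * ((th - ths) \<bullet> (th - ths))" by (simp add: scalar_prod_self_nonneg)
qed

end

locale power_network = connected_weighted_graph N es w m + reduced_coordinates N es w m Y
  for N es w m Y
begin

lemma reduced_rayleigh_bounds:
  assumes N: "2 \<le> N" and u: "u \<in> carrier_vec (N - 1)"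
  shows "lambda2 N es w m * (u \<bullet> u) \<le> (Y *\<^sub>v u) \<bullet> (normalized_laplacian *\<^sub>v (Y *\<^sub>v u))"
    and "(Y *\<^sub>v u) \<bullet> (normalized_laplacian *\<^sub>v (Y *\<^sub>v u)) \<le> lambdaN N es w m * (u \<bullet> u)"
proof -
  let ?e = "unit_vec (N - 1) 0 :: real vec"
  have e: "?e \<in> carrier_vec (N - 1)" by simp
  have "(Y *\<^sub>v ?e) \<bullet> (Y *\<^sub>v ?e) = 1" using Y_isometry[OF e] N by simp
  then have "Y *\<^sub>v ?e \<noteq> 0\<^sub>v N" by auto
  moreover have "Y *\<^sub>v ?e \<in> carrier_vec N" "Y *\<^sub>v u \<in> carrier_vec N" using Y_carrier u by simp_all
  ultimately show "lambda2 N es w m * (u \<bullet> u) \<le> (Y *\<^sub>v u) \<bullet> (normalized_laplacian *\<^sub>v (Y *\<^sub>v u))"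
    using lambda2_rayleigh[of "Y *\<^sub>v ?e" "Y *\<^sub>v u"] sqrt_mass_perp_Y[OF e] sqrt_mass_perp_Y[OF u]
      Y_isometry[OF u] by simp
  show "(Y *\<^sub>v u) \<bullet> (normalized_laplacian *\<^sub>v (Y *\<^sub>v u)) \<le> lambdaN N es w m * (u \<bullet> u)"
    using lambdaN_rayleigh[of "Y *\<^sub>v u"] Y_isometry[OF u] Y_carrier u N by simp
qed

end

theorem lemmaD3:
  fixes N :: nat and es :: "(nat \<times> nat) list" and w m :: "nat \<Rightarrow> real"
    and Y :: "real mat" and \<rho> k \<eta> :: real
    and d\<omega> th ths :: "real vec"
  assumes N2: "N \<ge> 2"
    and graph: "graph_ok N es" and conn: "connected_graph N es"
    and wpos: "\<forall>l < length es. w l > 0"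
    and mpos: "\<forall>i < N. m i > 0"
    and Ycar: "Y \<in> carrier_mat N (N - 1)"
    and Yorth: "transpose_mat Y * Y = 1\<^sub>m (N - 1)"
    and Ynull: "\<forall>j < N - 1. vec N (\<lambda>i. sqrt (m i)) \<bullet> col Y j = 0"
    and Yspan: "\<forall>x \<in> carrier_vec N. vec N (\<lambda>i. sqrt (m i)) \<bullet> x = 0 \<longrightarrow>
                  (\<exists>c \<in> carrier_vec (N - 1). x = Y *\<^sub>v c)"
    and rho: "0 < \<rho>" "\<rho> < pi / 2"
    and k: "k > 0" and eta: "\<eta> > 0"
    and dw: "d\<omega> \<in> carrier_vec N"
    and th: "th \<in> Sset N es m Y \<rho>" and ths: "ths \<in> Sset N es m Y \<rho>"
  shows
    "let M = Mmat N m; d\<theta> = th - ths;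
         U = Upot N es w m Y; gU = gradU N es w m Y;
         l2 = lambda2 N es w m; lN = lambdaN N es w m;
         V = 1/2 * (d\<omega> \<bullet> (M *\<^sub>v d\<omega>))
             + k * (U th - U ths - gU ths \<bullet> (th - ths))
             + \<eta> * ((gU th - gU ths) \<bullet> (transpose_mat Y * Msqrt N m *\<^sub>v d\<omega>))
     in V \<le> 3/4 * (d\<omega> \<bullet> (M *\<^sub>v d\<omega>)) + (1/2 * k * lN + \<eta>^2 * lN^2) * (d\<theta> \<bullet> d\<theta>)
      \<and> V \<ge> 1/4 * (d\<omega> \<bullet> (M *\<^sub>v d\<omega>)) + (1/2 * k * l2 * sin \<rho> - \<eta>^2 * lN^2) * (d\<theta> \<bullet> d\<theta>)"
proof -
  interpret connected_weighted_graph N es w m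
    using graph conn wpos mpos by unfold_locales simp_all
  interpret power_network N es w m Y
    using Ycar Yorth Ynull by unfold_locales (simp_all add: sqrt_mass_def)
  let ?g = "gradU N es w m Y th - gradU N es w m Y ths" and ?c = "transpose_mat Y * Msqrt N m *\<^sub>v d\<omega>"
  have thc: "th \<in> carrier_vec (N - 1)" and ths_c: "ths \<in> carrier_vec (N - 1)"
    using th ths by (simp_all add: Sset_def)
  then have dtc: "th - ths \<in> carrier_vec (N - 1)" by simp
  have "?g \<in> carrier_vec (N - 1)" using gradU_carrier[of th] gradU_carrier[of ths] by simp
  moreover have "?c \<in> carrier_vec (N - 1)" using Ycar by (simp add: Msqrt_def)
  ultimately have "(?g \<bullet> ?c)\<^sup>2 \<le> (?g \<bullet> ?g) * (?c \<bullet> ?c)" by (rule scalar_prod_Cauchy_Schwarz)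
  from Lyapunov_sandwich[OF k sin_ge_zero Upot_Bregman_bounds[OF _ th ths]
      reduced_rayleigh_bounds[OF N2 dtc] this _ gradU_diff_bound[OF _ thc ths_c]
      scalar_prod_self_nonneg transpose_Y_Msqrt_sq_le[OF dw]]
  show ?thesis
    using rho N2 by (simp add: Let_def less_imp_le scalar_prod_self_nonneg)
qed

end
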